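(* For all $p\in[1,\infty)$, $$\sup_{N\in\mathbb{N},\,N\ge8\lambda pT}\ \mathbb{E}\Big[\sup_{n\in\{0,1,\dots,N\}}|D^N_n|^p\Big]<\infty.$$
   Context: Standing setting: $T\in(0,\infty)$; $(\Omega,\mathcal{F},\mathbb{P})$ with normal filtration $(\mathcal{F}_t)_{t\in[0,T]}$; $d,m\in\mathbb{N}$; $W$ an $m$-dimensional standard $(\mathcal{F}_t)$-Brownian motion; $\xi$ $\mathcal{F}_0$-measurable in $\mathbb{R}^d$ with $\mathbb{E}\|\xi\|^p<\infty$ for all $p\ge1$. $\|\cdot\|$ Euclidean/operator norm. $\mu\colon\mathbb{R}^d\to\mathbb{R}^d$ is $C^1$, $\sigma\colon\mathbb{R}^d\to\mathbb{R}^{d\times m}$, and there is $c\in(0,\infty)$ with $\|\mu'(x)\|\le c(1+\|x\|^c)$, $\|\sigma(x)-\sigma(y)\|\le c\|x-y\|$, $\langle x-y,\mu(x)-\mu(y)\rangle\le c\|x-y\|^2$. $\Delta W^N_n:=W_{(n+1)T/N}-W_{nT/N}$; tamed Euler scheme $Y^N_0=\xi$, $Y^N_{n+1}=Y^N_n+\frac{(T/N)\mu(Y^N_n)}{1+(T/N)\|\mu(Y^N_n)\|}+\sigma(Y^N_n)\Delta W^N_n$. $\lambda:=(1+2c+T+\|\mu(0)\|+\|\sigma(0)\|)^4$; $\alpha^N_n:=\mathbf{1}_{\{\|Y^N_n\|\ge1\}}\big\langle\frac{Y^N_n}{\|Y^N_n\|},\frac{\sigma(Y^N_n)}{\|Y^N_n\|}\Delta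 W^N_n\big\rangle$ (0 if $\|Y^N_n\|<1$); $D^N_n:=(\lambda+\|\xi\|)\exp\big(\lambda+\sup_{u\in\{0,\dots,n\}}\sum_{k=u}^{n-1}[\lambda\|\Delta W^N_k\|^2+\alpha^N_k]\big)$ for $n\in\{0,\dots,N\}$, empty sums being $0$. *)

theory Defs
  imports "HOL-Probability.Probability"
begin

definition op_norm :: "real^'m^'d \<Rightarrow> real" where
  "op_norm A = onorm (\<lambda>v. A *v v)"

definition normal_filtration :: "'a measure \<Rightarrow> real \<Rightarrow> (real \<Rightarrow> 'a measure) \<Rightarrow> bool" where
  "normal_filtration M T F \<longleftrightarrow>
     (\<forall>t\<in>{0..T}. space (F t) = space M \<and> sets (F t) \<subseteq> sets M) \<and>
     (\<forall>s\<in>{0..T}. \<forall>t\<in>{0..T}. s \<le> t \<longrightarrow> sets (F s) \<subseteq> sets (F t)) \<and>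
     (\<forall>t\<in>{0..<T}. (\<Inter>u\<in>{t<..T}. sets (F u)) = sets (F t)) \<and>
     (\<forall>A\<in>sets M. emeasure M A = 0 \<longrightarrow> A \<in> sets (F 0))"

definition std_brownian_motion ::
    "'a measure \<Rightarrow> real \<Rightarrow> (real \<Rightarrow> 'a measure) \<Rightarrow> (real \<Rightarrow> 'a \<Rightarrow> real^'m) \<Rightarrow> bool" where
  "std_brownian_motion M T F W \<longleftrightarrow>
     (\<forall>\<omega>\<in>space M. W 0 \<omega> = 0 \<and> continuous_on {0..T} (\<lambda>t. W t \<omega>)) \<and>
     (\<forall>t\<in>{0..T}. W t \<in> borel_measurable (F t)) \<and>
     (\<forall>s\<in>{0..T}. \<forall>t\<in>{0..T}. s < t \<longrightarrow>
        prob_space.indep_set M (sets (F s))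
          {(\<lambda>\<omega>. W t \<omega> - W s \<omega>) -` U \<inter> space M | U. U \<in> sets borel} \<and>
        prob_space.indep_vars M (\<lambda>_. borel) (\<lambda>i \<omega>. (W t \<omega> - W s \<omega>) $ i) UNIV \<and>
        (\<forall>i. distributed M lborel (\<lambda>\<omega>. (W t \<omega> - W s \<omega>) $ i)
               (\<lambda>x. ennreal (normal_density 0 (sqrt (t - s)) x))))"

definition dW :: "real \<Rightarrow> (real \<Rightarrow> 'a \<Rightarrow> real^'m) \<Rightarrow> nat \<Rightarrow> nat \<Rightarrow> 'a \<Rightarrow> real^'m" where
  "dW T W N n \<omega> = W (real (Suc n) * T / real N) \<omega> - W (real n * T / real N) \<omega>"

primrec tamed_euler ::
    "real \<Rightarrow> (real^'d \<Rightarrow> real^'d) \<Rightarrow> (real^'d \<Rightarrow> real^'m^'d) \<Rightarrow> (real \<Rightarrow> 'a \<Rightarrow> real^'m)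
      \<Rightarrow> ('a \<Rightarrow> real^'d) \<Rightarrow> nat \<Rightarrow> nat \<Rightarrow> 'a \<Rightarrow> real^'d" where
  "tamed_euler T \<mu> \<sigma> W \<xi> N 0 \<omega> = \<xi> \<omega>"
| "tamed_euler T \<mu> \<sigma> W \<xi> N (Suc n) \<omega> =
     (let y = tamed_euler T \<mu> \<sigma> W \<xi> N n \<omega>; h = T / real N in
      y + (h / (1 + h * norm (\<mu> y))) *\<^sub>R \<mu> y + \<sigma> y *v dW T W N n \<omega>)"

definition alphaN ::
    "real \<Rightarrow> (real^'d \<Rightarrow> real^'d) \<Rightarrow> (real^'d \<Rightarrow> real^'m^'d) \<Rightarrow> (real \<Rightarrow> 'a \<Rightarrow> real^'m)
      \<Rightarrow> ('a \<Rightarrow> real^'d) \<Rightarrow> nat \<Rightarrow> nat \<Rightarrow> 'a \<Rightarrow> real" where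
  "alphaN T \<mu> \<sigma> W \<xi> N n \<omega> =
     (let y = tamed_euler T \<mu> \<sigma> W \<xi> N n \<omega> in
      if norm y \<ge> 1 then inner ((1 / norm y) *\<^sub>R y) ((1 / norm y) *\<^sub>R (\<sigma> y *v dW T W N n \<omega>))
      else 0)"

definition lam :: "real \<Rightarrow> real \<Rightarrow> (real^'d \<Rightarrow> real^'d) \<Rightarrow> (real^'d \<Rightarrow> real^'m^'d) \<Rightarrow> real" where
  "lam c T \<mu> \<sigma> = (1 + 2 * c + T + norm (\<mu> 0) + op_norm (\<sigma> 0)) ^ 4"

definition DN ::
    "real \<Rightarrow> real \<Rightarrow> (real^'d \<Rightarrow> real^'d) \<Rightarrow> (real^'d \<Rightarrow> real^'m^'d) \<Rightarrow> (real \<Rightarrow> 'a \<Rightarrow> real^'m)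
      \<Rightarrow> ('a \<Rightarrow> real^'d) \<Rightarrow> nat \<Rightarrow> nat \<Rightarrow> 'a \<Rightarrow> real" where
  "DN c T \<mu> \<sigma> W \<xi> N n \<omega> =
     (let l = lam c T \<mu> \<sigma> in
      (l + norm (\<xi> \<omega>)) *
      exp (l + Max ((\<lambda>u. \<Sum>k\<in>{u..<n}. l * (norm (dW T W N k \<omega>))\<^sup>2 + alphaN T \<mu> \<sigma> W \<xi> N k \<omega>)
                    ` {0..n})))"

end

theory Submission
  imports Defs
begin

(*
  Put h = T/N, t_k = k h and b_k = Y_k^T sigma(Y_k) / |Y_k|^2 (and b_k = 0 if |Y_k| < 1), so
  that alpha_k = <b_k, Delta W_k>, |b_k| <= K := |sigma(0)| + c and b_k is F_{t_k}-measurable.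
  With A_n = sum_{k<n} alpha_k the maximum in D^N_n is attained at some u <= n, and the
  four-factor inequality  xyzw <= y^2 + x^6 + z^6 + w^6  bounds |D^N_n|^p pathwise by
    exp(2 p lambda sum_{k<N} |Delta W_k|^2) + (lambda + |xi|)^(6p) e^(6 p lambda)
      + sqrt(max_n exp(12 p A_n)) + sqrt(max_n exp(-12 p A_n)).
  The first term has expectation <= exp(8 p lambda T m) by the chi-square moment generating
  function; this is where 8 p lambda h <= 1, i.e. N >= 8 lambda p T, is needed.  The second
  term is integrable by the moment assumption on xi.  For the last two, the Gaussian moment
  generating function makes exp(r A_n) a submartingale with E exp(r A_N) <= exp(r^2 K^2 T / 2),
  and a Ville-type maximal inequality combined with a dyadic layer-cake estimate yields
  E sqrt(max_n X_n) <= 1 + 4 E X_N for every nonnegative submartingale X.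
*)

lemma prod3_le_sum_cubes:
  fixes a b c :: real
  assumes "0 \<le> a" "0 \<le> b" "0 \<le> c"
  shows "a * b * c \<le> a^3 + b^3 + c^3"
proof -
  define m where "m = max a (max b c)"
  have am: "a \<le> m" "b \<le> m" "c \<le> m" by (auto simp: m_def)
  have "a * b * c \<le> m * m * m"
    using assms am by (intro mult_mono) (auto intro: mult_nonneg_nonneg)
  also have "\<dots> = m^3" by (simp add: power3_eq_cube)
  also have "\<dots> \<le> a^3 + b^3 + c^3"
  proof -
    have "m = a \<or> m = b \<or> m = c" by (auto simp: m_def max_def)
    moreover have "0 \<le> a^3" "0 \<le> b^3" "0 \<le> c^3" using assms by simp_all
    ultimately show ?thesis by auto
  qed
  finally show ?thesis .
qed

text \<open>The four-factor AM-GM type inequality used to split the majorant into four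
  separately integrable terms.\<close>
lemma prod4_le_square_sixth_powers:
  fixes x y z w :: real
  assumes "0 \<le> x" "0 \<le> y" "0 \<le> z" "0 \<le> w"
  shows "x * y * z * w \<le> y^2 + x^6 + z^6 + w^6"
proof -
  define q where "q = x * z * w"
  have "x * y * z * w = y * q" by (simp add: q_def ac_simps)
  also have "\<dots> \<le> y^2 + q^2"
  proof -
    have "0 \<le> (y - q)^2" by simp
    moreover have "0 \<le> y * q" using assms by (simp add: q_def)
    ultimately show ?thesis by (simp add: power2_diff)
  qed
  also have "q^2 = x^2 * z^2 * w^2" by (simp add: q_def power_mult_distrib)
  also have "\<dots> \<le> (x^2)^3 + (z^2)^3 + (w^2)^3" by (rule prod3_le_sum_cubes) simp_all
  also have "\<dots> = x^6 + z^6 + w^6" by (simp flip: power_mult)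
  finally show ?thesis by simp
qed

lemma powr_add_le:
  fixes a b q :: real
  assumes "0 \<le> a" "0 \<le> b" "0 \<le> q"
  shows "(a + b) powr q \<le> 2 powr q * (a powr q + b powr q)"
proof -
  have "(a + b) powr q \<le> (2 * max a b) powr q"
    using assms by (intro powr_mono2) auto
  also have "\<dots> = 2 powr q * (max a b) powr q" by (simp add: powr_mult)
  also have "(max a b) powr q \<le> a powr q + b powr q"
    by (cases "a \<le> b") (auto simp: max_def)
  then have "2 powr q * (max a b) powr q \<le> 2 powr q * (a powr q + b powr q)"
    by (intro mult_left_mono) auto
  finally show ?thesis .
qed

lemma sqrt_exp_double: "sqrt (exp (2 * x)) = exp (x::real)"
proof -
  have "exp (2 * x) = (exp x)^2" by (simp add: exp_of_nat_mult[symmetric])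
  then show ?thesis by simp
qed

text \<open>Bounds the factor 1/sqrt(1 - 2 s h) of the chi-square moment generating function.\<close>
lemma inv_sqrt_one_minus_le_exp:
  fixes x :: real
  assumes "0 \<le> x" "x \<le> 1/2"
  shows "1 / sqrt (1 - x) \<le> exp (2 * x)"
proof -
  have pos: "0 < 1 - x" "1 - x \<le> 1" using assms by auto
  then have s1: "sqrt (1 - x) \<le> 1" by simp
  have "1 - x = sqrt (1 - x) * sqrt (1 - x)" using pos by simp
  also have "\<dots> \<le> sqrt (1 - x) * 1" by (rule mult_left_mono[OF s1]) (use pos in simp)
  finally have "1 - x \<le> sqrt (1 - x)" by simp
  then have "1 / sqrt (1 - x) \<le> 1 / (1 - x)" using pos by (intro divide_left_mono) auto
  also have "\<dots> \<le> 1 + 2 * x"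
    using assms mult_left_mono[of "x*2" 1 x] by (simp add: field_simps)
  also have "\<dots> \<le> exp (2 * x)" by (rule exp_ge_add_one_self)
  finally show ?thesis .
qed

lemma sqrt_le_dyadic_layers:
  assumes G: "0 \<le> (G::real)"
  shows "ennreal (sqrt G) \<le> 1 + (\<Sum>j. ennreal (2^(j+1)) * indicator {x. 4^j \<le> x} G)"
proof (cases "G < 1")
  case True
  then show ?thesis using G by (simp add: ennreal_leI add_increasing2)
next
  case False
  define k where "k = nat \<lfloor>G\<rfloor>"
  have k1: "1 \<le> k" using False by (simp add: k_def le_nat_iff le_floor_iff)
  obtain j where j: "4^j \<le> k" "k < 4^(j+1)" using ex_power_ivl1[of 4 k] k1 by auto
  have kG: "real k \<le> G" "G < real k + 1" using G by (simp_all add: k_def)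
  have "(4::real)^j \<le> real k" using j(1) by (metis of_nat_le_iff of_nat_numeral of_nat_power)
  then have jG: "4^j \<le> G" using kG by linarith
  have "k + 1 \<le> 4^(j+1)" using j(2) by simp
  then have "real (k + 1) \<le> real (4^(j+1))" by (simp only: of_nat_le_iff)
  then have "G \<le> 4^(j+1)" using kG by simp
  moreover have "((2::real)^(j+1))^2 = (2^2)^(j+1)" by (metis power_mult mult.commute)
  ultimately have G4: "G \<le> (2^(j+1))^2" by simp
  have "sqrt G \<le> 2^(j+1)" using G4 G by (intro real_le_lsqrt) simp_all
  then have "ennreal (sqrt G) \<le> ennreal (2^(j+1)) * indicator {x. 4^j \<le> x} G"
    using jG by (simp add: ennreal_leI)
  also have "\<dots> \<le> (\<Sum>j. ennreal (2^(j+1)) * indicator {x. 4^j \<le> x} G)"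
  proof -
    define f where "f = (\<lambda>j. ennreal (2^(j+1)) * indicator {x. 4^j \<le> x} G)"
    have "sum f {j} \<le> suminf f" by (rule sum_le_suminf[OF summableI]) auto
    then have "f j \<le> suminf f" by simp
    then show ?thesis unfolding f_def .
  qed
  also have "\<dots> \<le> 1 + (\<Sum>j. ennreal (2^(j+1)) * indicator {x. 4^j \<le> x} G)" by simp
  finally show ?thesis .
qed

text \<open>Weight 2^(j+1) of the j-th dyadic layer, split as (2/2^j) * 4^j: the factor 4^j is
  paid for by Ville's inequality at level 4^j, the factors 2/2^j sum to 4.\<close>
lemma ennreal_two_pow_Suc: "ennreal (2^(j+1)) = ennreal (2 / 2^j) * ennreal (4^j)"
proof -
  have "(4::real)^j = 2^j * 2^j" by (simp flip: power_mult_distrib)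
  then have "(2::real)^(j+1) = (2 / 2^j) * 4^j" by simp
  then show ?thesis by (simp only:) (rule ennreal_mult; simp)
qed

lemma suminf_two_over_pow2: "(\<Sum>j. ennreal (2 / 2^j)) = 4"
proof -
  have sm: "summable (\<lambda>j. 2 * (1/2::real)^j)" by (intro summable_mult summable_geometric) simp
  have "(\<Sum>j. ennreal (2 / 2^j)) = (\<Sum>j. ennreal (2 * (1/2)^j))" by (simp add: power_one_over)
  also have "\<dots> = ennreal (\<Sum>j. 2 * (1/2::real)^j)" by (rule suminf_ennreal2) (auto intro: sm)
  also have "(\<Sum>j. 2 * (1/2::real)^j) = 4"
    using suminf_mult[OF summable_geometric[of "1/2::real"], of 2] suminf_geometric[of "1/2::real"]
    by simp
  finally show ?thesis by simp
qed


lemma norm_square_vec_eq: "(norm (x::real^'n::finite))^2 = (\<Sum>i\<in>UNIV. (x $ i)^2)"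
  unfolding power2_norm_eq_inner by (simp add: inner_vec_def power2_eq_square)

lemma norm_mult_le_op_norm: "norm (A *v x) \<le> op_norm A * norm (x::real^'m::finite)"
  for A :: "real^'m::finite^'d::finite"
  unfolding op_norm_def by (rule onorm) simp

lemma op_norm_nonneg: "0 \<le> op_norm (A :: real^'m::finite^'d::finite)"
  unfolding op_norm_def by (rule onorm_pos_le) simp

lemma op_norm_triangle: "op_norm (A + B) \<le> op_norm A + op_norm (B :: real^'m::finite^'d::finite)"
proof -
  have "(*v) (A + B) = (\<lambda>x. A *v x + B *v x)"
    by (rule ext) (simp add: matrix_vector_mult_add_rdistrib)
  then show ?thesis unfolding op_norm_def using onorm_triangle[of "(*v) A" "(*v) B"] by simp
qed

text \<open>The Frobenius norm is dominated by the operator norm up to a dimensional constant;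
  this turns operator-norm Lipschitz continuity of sigma into ordinary continuity.\<close>
lemma norm_le_op_norm:
  "norm (A :: real^'m::finite^'d::finite) \<le> real CARD('d) * real CARD('m) * op_norm A"
proof -
  have "norm A \<le> (\<Sum>i\<in>UNIV. norm (A $ i))"
    unfolding norm_vec_def by (rule L2_set_le_sum) simp
  also have "\<dots> \<le> (\<Sum>i\<in>(UNIV::'d set). \<Sum>j\<in>(UNIV::'m set). \<bar>A $ i $ j\<bar>)"
    by (intro sum_mono norm_le_l1_cart)
  also have "\<dots> \<le> (\<Sum>i\<in>(UNIV::'d set). \<Sum>j\<in>(UNIV::'m set). op_norm A)"
    unfolding op_norm_def by (intro sum_mono matrix_component_le_onorm)
  finally show ?thesis by (simp add: mult.assoc)
qed

lemma norm_vector_matrix_le: "norm (y v* A) \<le> op_norm A * norm y"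
  for A :: "real^'m::finite^'d::finite"
proof -
  have "(norm (y v* A))^2 = inner y (A *v (y v* A))"
    by (simp add: power2_norm_eq_inner dot_lmul_matrix)
  also have "\<dots> \<le> norm y * norm (A *v (y v* A))" by (rule norm_cauchy_schwarz)
  also have "\<dots> \<le> norm y * (op_norm A * norm (y v* A))"
    by (intro mult_left_mono norm_mult_le_op_norm) simp
  finally have *: "(norm (y v* A))^2 \<le> (op_norm A * norm y) * norm (y v* A)"
    by (simp add: ac_simps)
  show ?thesis
  proof (cases "norm (y v* A) = 0")
    case True
    then show ?thesis using op_norm_nonneg[of A] by simp
  next
    case False
    with * show ?thesis by (simp add: power2_eq_square)
  qed
qed

lemma continuous_matrix_vector_mult:
  "continuous_on UNIV (\<lambda>x::(real^'m::finite^'d::finite) \<times> (real^'m). fst x *v snd x)"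
  unfolding matrix_vector_mult_def by (intro continuous_intros)

lemma continuous_vector_matrix_mult:
  "continuous_on UNIV (\<lambda>x::(real^'m::finite^'d::finite) \<times> (real^'d). snd x v* fst x)"
  unfolding vector_matrix_mult_def by (intro continuous_intros)


section \<open>Gaussian integrals\<close>

lemma nn_integral_normal_density: "s > 0 \<Longrightarrow> (\<integral>\<^sup>+x. ennreal (normal_density m s x) \<partial>lborel) = 1"
  by (subst nn_integral_eq_integral) auto

lemma normal_mgf:
  assumes s: "s > 0"
  shows "(\<integral>\<^sup>+x. ennreal (normal_density 0 s x) * ennreal (exp (t * x)) \<partial>lborel)
    = ennreal (exp (t^2 * s^2 / 2))"
proof -
  have eq: "normal_density 0 s x * exp (t * x) = exp (t^2 * s^2 / 2) * normal_density (t * s^2) s x"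
    for x
  proof -
    have "- (x - 0)\<^sup>2 / (2 * s\<^sup>2) + t * x = t^2 * s^2 / 2 + (- (x - t * s^2)\<^sup>2 / (2 * s\<^sup>2))"
      using s by (simp add: field_simps power2_eq_square)
    then have "exp (- (x - 0)\<^sup>2 / (2 * s\<^sup>2)) * exp (t * x)
        = exp (t^2 * s^2 / 2) * exp (- (x - t * s^2)\<^sup>2 / (2 * s\<^sup>2))"
      by (simp only: mult_exp_exp)
    then show ?thesis unfolding normal_density_def
      by (simp only: mult.assoc) (simp only: mult.left_commute)
  qed
  have "(\<integral>\<^sup>+x. ennreal (normal_density 0 s x) * ennreal (exp (t * x)) \<partial>lborel)
      = (\<integral>\<^sup>+x. ennreal (exp (t^2 * s^2 / 2)) * ennreal (normal_density (t * s^2) s x) \<partial>lborel)"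
    by (intro nn_integral_cong) (simp add: ennreal_mult'[symmetric] eq)
  also have "\<dots> = ennreal (exp (t^2 * s^2 / 2))"
    using s by (simp add: nn_integral_cmult nn_integral_normal_density)
  finally show ?thesis .
qed

lemma normal_square_mgf:
  assumes s: "s > 0" and a: "2 * a * s^2 < 1"
  shows "(\<integral>\<^sup>+x. ennreal (normal_density 0 s x) * ennreal (exp (a * x^2)) \<partial>lborel)
    = ennreal (1 / sqrt (1 - 2 * a * s^2))"
proof -
  define q where "q = 1 - 2 * a * s^2"
  have q: "q > 0" using a by (simp add: q_def)
  define s' where "s' = s / sqrt q"
  have s': "s' > 0" using s q by (simp add: s'_def)
  have s'2: "s'^2 = s^2 / q" using q by (simp add: s'_def power_divide)
  have eq: "normal_density 0 s x * exp (a * x^2) = (1 / sqrt q) * normal_density 0 s' x" for x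
  proof -
    have e1: "- (x - 0)\<^sup>2 / (2 * s\<^sup>2) + a * x^2 = - (x - 0)\<^sup>2 / (2 * s'\<^sup>2)"
      using s q by (simp add: s'2 q_def field_simps)
    have e2: "1 / sqrt (2 * pi * s\<^sup>2) = (1 / sqrt q) * (1 / sqrt (2 * pi * s'\<^sup>2))"
      using s q by (simp add: s'2 real_sqrt_divide real_sqrt_mult)
    show ?thesis unfolding normal_density_def e2
      by (simp only: mult.assoc mult_exp_exp e1)
  qed
  have "(\<integral>\<^sup>+x. ennreal (normal_density 0 s x) * ennreal (exp (a * x^2)) \<partial>lborel)
      = (\<integral>\<^sup>+x. ennreal (1 / sqrt q) * ennreal (normal_density 0 s' x) \<partial>lborel)"
    using q by (intro nn_integral_cong) (simp add: ennreal_mult'[symmetric] eq)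
  also have "\<dots> = ennreal (1 / sqrt q)"
    using s' by (simp add: nn_integral_cmult nn_integral_normal_density)
  finally show ?thesis by (simp add: q_def)
qed


section \<open>A maximal inequality for nonnegative submartingales\<close>

definition finite_filtration :: "'a measure \<Rightarrow> nat \<Rightarrow> (nat \<Rightarrow> 'a measure) \<Rightarrow> bool" where
  "finite_filtration M N G \<longleftrightarrow>
     (\<forall>n\<le>N. space (G n) = space M \<and> sets (G n) \<subseteq> sets M) \<and>
     (\<forall>j n. j \<le> n \<longrightarrow> n \<le> N \<longrightarrow> sets (G j) \<subseteq> sets (G n))"

lemma finite_filtration_measurable_mono:
  assumes "finite_filtration M N G" "f \<in> measurable (G j) S" "j \<le> n" "n \<le> N"
  shows "f \<in> measurable (G n) S"
proof -
  have "space (G j) = space (G n)" "sets (G j) \<subseteq> sets (G n)"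
    using assms(1,3,4) unfolding finite_filtration_def by simp_all
  then show ?thesis using assms(2) unfolding measurable_def by auto
qed

lemma finite_filtration_measurable_M:
  assumes "finite_filtration M N G" "f \<in> measurable (G n) S" "n \<le> N"
  shows "f \<in> measurable M S"
proof -
  have "space (G n) = space M" "sets (G n) \<subseteq> sets M"
    using assms(1,3) unfolding finite_filtration_def by simp_all
  then show ?thesis using assms(2) unfolding measurable_def by auto
qed

text \<open>The event that n is the first index at which X reaches the level a.  These events are
  disjoint and adapted, which is all Ville's inequality needs.\<close>
definition first_hit :: "'a measure \<Rightarrow> (nat \<Rightarrow> 'a \<Rightarrow> real) \<Rightarrow> real \<Rightarrow> nat \<Rightarrow> 'a set" where
  "first_hit M X a n = {\<omega>\<in>space M. a \<le> X n \<omega>} - (\<Union>j\<in>{..<n}. {\<omega>\<in>space M. a \<le> X j \<omega>})"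

lemma first_hit_unique: "\<omega> \<in> first_hit M X a n \<Longrightarrow> \<omega> \<in> first_hit M X a m \<Longrightarrow> n = m"
  unfolding first_hit_def by (cases n m rule: linorder_cases) auto

lemma first_hit_sets:
  assumes G: "finite_filtration M N G" and Xm: "\<And>n. n \<le> N \<Longrightarrow> X n \<in> borel_measurable (G n)"
    and n: "n \<le> N"
  shows "first_hit M X a n \<in> sets (G n)"
proof -
  have sp: "space (G n) = space M" using G n by (simp add: finite_filtration_def)
  have "{\<omega>\<in>space (G n). a \<le> X j \<omega>} \<in> sets (G n)" if j: "j \<le> n" for j
  proof -
    have [measurable]: "X j \<in> borel_measurable (G n)"
      using finite_filtration_measurable_mono[OF G Xm j n] j n by simp
    show ?thesis by measurable
  qed
  then show ?thesis unfolding first_hit_def sp[symmetric] by (intro sets.Diff sets.finite_UN) auto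
qed

lemma first_hit_cover:
  assumes \<omega>: "\<omega> \<in> space M"
  shows "ennreal a * indicator {\<omega>\<in>space M. a \<le> Max ((\<lambda>n. X n \<omega>) ` {0..N})} \<omega>
    \<le> (\<Sum>n\<in>{..N}. indicator (first_hit M X a n) \<omega> * ennreal (X n \<omega>))"
proof (cases "a \<le> Max ((\<lambda>n. X n \<omega>) ` {0..N})")
  case True
  then obtain n where n: "n \<le> N" "a \<le> X n \<omega>" by (subst (asm) Max_ge_iff) auto
  define n0 where "n0 = (LEAST n. a \<le> X n \<omega>)"
  have n0: "a \<le> X n0 \<omega>" unfolding n0_def by (rule LeastI[of _ n]) (rule n(2))
  have "n0 \<le> n" unfolding n0_def by (rule Least_le) (rule n(2))
  then have n0N: "n0 \<le> N" using n(1) by linarith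
  have "\<not> a \<le> X j \<omega>" if "j < n0" for j
    using not_less_Least[of j "\<lambda>n. a \<le> X n \<omega>"] that unfolding n0_def by blast
  then have "\<omega> \<in> first_hit M X a n0" unfolding first_hit_def using \<omega> n0 by blast
  then have "ennreal a \<le> indicator (first_hit M X a n0) \<omega> * ennreal (X n0 \<omega>)"
    using n0 by (simp add: ennreal_leI)
  also have "\<dots> \<le> (\<Sum>n\<in>{..N}. indicator (first_hit M X a n) \<omega> * ennreal (X n \<omega>))"
    by (rule member_le_sum) (use n0N in auto)
  finally show ?thesis using True \<omega> by simp
qed simp

text \<open>Pointwise: by disjointness at most one first-hit event occurs.\<close>
lemma first_hit_sum_le: "(\<Sum>n\<in>{..N}. indicator (first_hit M X a n) \<omega> * e) \<le> (e::ennreal)"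
proof (cases "\<exists>n\<le>N. \<omega> \<in> first_hit M X a n")
  case True
  then obtain n0 where n0: "n0 \<le> N" "\<omega> \<in> first_hit M X a n0" by blast
  have "(\<Sum>n\<in>{..N}. indicator (first_hit M X a n) \<omega> * e) = (\<Sum>n\<in>{..N}. if n = n0 then e else 0)"
    using n0 by (intro sum.cong refl) (auto simp: indicator_def dest: first_hit_unique)
  also have "\<dots> = e" using n0 by simp
  finally show ?thesis by simp
next
  case False
  then have "(\<Sum>n\<in>{..N}. indicator (first_hit M X a n) \<omega> * e) = 0"
    by (intro sum.neutral) (auto simp: indicator_def)
  then show ?thesis by (simp only:) simp
qed

context prob_space
begin

text \<open>Ville's inequality.  The submartingale property of X is phrased through test functions:
  E[g X_j] \<le> E[g X_N] for every nonnegative G_j-measurable g.\<close>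
lemma maximal_inequality:
  fixes X :: "nat \<Rightarrow> 'a \<Rightarrow> real"
  assumes G: "finite_filtration M N G"
    and Xm: "\<And>n. n \<le> N \<Longrightarrow> X n \<in> borel_measurable (G n)"
    and sub: "\<And>j g. j \<le> N \<Longrightarrow> g \<in> borel_measurable (G j) \<Longrightarrow>
        (\<integral>\<^sup>+\<omega>. g \<omega> * ennreal (X j \<omega>) \<partial>M) \<le> (\<integral>\<^sup>+\<omega>. g \<omega> * ennreal (X N \<omega>) \<partial>M)"
  shows "ennreal a * emeasure M {\<omega>\<in>space M. a \<le> Max ((\<lambda>n. X n \<omega>) ` {0..N})}
    \<le> (\<integral>\<^sup>+\<omega>. ennreal (X N \<omega>) \<partial>M)"
proof -
  define B where "B = first_hit M X a"
  have XM[measurable]: "n \<le> N \<Longrightarrow> X n \<in> borel_measurable M" for n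
    using finite_filtration_measurable_M[OF G Xm] .
  have BG: "n \<le> N \<Longrightarrow> B n \<in> sets (G n)" for n
    unfolding B_def by (rule first_hit_sets[OF G Xm])
  have BM: "n \<le> N \<Longrightarrow> B n \<in> sets M" for n
    using BG G by (auto simp: finite_filtration_def)
  have IM: "(\<lambda>x. indicator (B n) x * ennreal (X j x)) \<in> borel_measurable M"
    if "n \<le> N" "j \<le> N" for n j
  proof -
    note [measurable] = BM[OF that(1)] XM[OF that(2)]
    show ?thesis by measurable
  qed
  have "(\<lambda>\<omega>. Max ((\<lambda>n. X n \<omega>) ` {0..N})) \<in> borel_measurable M" by measurable
  then have "{\<omega>\<in>space M. a \<le> Max ((\<lambda>n. X n \<omega>) ` {0..N})} \<in> sets M" by measurable
  then have "ennreal a * emeasure M {\<omega>\<in>space M. a \<le> Max ((\<lambda>n. X n \<omega>) ` {0..N})}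
      = (\<integral>\<^sup>+\<omega>. ennreal a * indicator {\<omega>\<in>space M. a \<le> Max ((\<lambda>n. X n \<omega>) ` {0..N})} \<omega> \<partial>M)"
    by (rule nn_integral_cmult_indicator[symmetric])
  also have "\<dots> \<le> (\<integral>\<^sup>+\<omega>. (\<Sum>n\<in>{..N}. indicator (B n) \<omega> * ennreal (X n \<omega>)) \<partial>M)"
    unfolding B_def by (intro nn_integral_mono first_hit_cover)
  also have "\<dots> = (\<Sum>n\<in>{..N}. \<integral>\<^sup>+\<omega>. indicator (B n) \<omega> * ennreal (X n \<omega>) \<partial>M)"
    by (intro nn_integral_sum) (auto intro: IM)
  also have "\<dots> \<le> (\<Sum>n\<in>{..N}. \<integral>\<^sup>+\<omega>. indicator (B n) \<omega> * ennreal (X N \<omega>) \<partial>M)"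
    by (intro sum_mono sub) (auto intro: BG borel_measurable_indicator)
  also have "\<dots> = (\<integral>\<^sup>+\<omega>. (\<Sum>n\<in>{..N}. indicator (B n) \<omega> * ennreal (X N \<omega>)) \<partial>M)"
    by (intro nn_integral_sum[symmetric]) (auto intro: IM)
  also have "\<dots> \<le> (\<integral>\<^sup>+\<omega>. ennreal (X N \<omega>) \<partial>M)"
    unfolding B_def by (intro nn_integral_mono first_hit_sum_le)
  finally show ?thesis .
qed

text \<open>Integrating Ville's inequality over dyadic levels 4^j bounds E sqrt(max X) linearly
  in E X_N.\<close>
lemma sqrt_max_bound:
  fixes X :: "nat \<Rightarrow> 'a \<Rightarrow> real"
  assumes G: "finite_filtration M N G"
    and Xm: "\<And>n. n \<le> N \<Longrightarrow> X n \<in> borel_measurable (G n)"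
    and Xnn: "\<And>n \<omega>. 0 \<le> X n \<omega>"
    and sub: "\<And>j g. j \<le> N \<Longrightarrow> g \<in> borel_measurable (G j) \<Longrightarrow>
        (\<integral>\<^sup>+\<omega>. g \<omega> * ennreal (X j \<omega>) \<partial>M) \<le> (\<integral>\<^sup>+\<omega>. g \<omega> * ennreal (X N \<omega>) \<partial>M)"
  shows "(\<integral>\<^sup>+\<omega>. ennreal (sqrt (Max ((\<lambda>n. X n \<omega>) ` {0..N}))) \<partial>M)
    \<le> 1 + 4 * (\<integral>\<^sup>+\<omega>. ennreal (X N \<omega>) \<partial>M)"
proof -
  define Gmax where "Gmax \<omega> = Max ((\<lambda>n. X n \<omega>) ` {0..N})" for \<omega>
  define E where "E = (\<integral>\<^sup>+\<omega>. ennreal (X N \<omega>) \<partial>M)"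
  define S where "S j = {\<omega>\<in>space M. (4::real)^j \<le> Gmax \<omega>}" for j
  have [measurable]: "n \<le> N \<Longrightarrow> X n \<in> borel_measurable M" for n
    using finite_filtration_measurable_M[OF G Xm] .
  have Gmax_nonneg: "0 \<le> Gmax \<omega>" for \<omega>
  proof -
    have "X 0 \<omega> \<le> Gmax \<omega>" unfolding Gmax_def by (intro Max_ge) auto
    then show ?thesis using Xnn[of 0 \<omega>] by linarith
  qed
  have "Gmax \<in> borel_measurable M" unfolding Gmax_def by measurable
  then have SM: "S j \<in> sets M" for j unfolding S_def by measurable
  have ville: "ennreal (4^j) * emeasure M (S j) \<le> E" for j
    unfolding S_def Gmax_def E_def by (rule maximal_inequality[OF G Xm sub]) auto
  have "(\<integral>\<^sup>+\<omega>. ennreal (sqrt (Gmax \<omega>)) \<partial>M)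
      \<le> (\<integral>\<^sup>+\<omega>. 1 + (\<Sum>j. ennreal (2^(j+1)) * indicator (S j) \<omega>) \<partial>M)"
  proof (intro nn_integral_mono)
    fix \<omega> assume "\<omega> \<in> space M"
    then have "(\<lambda>j. ennreal (2^(j+1)) * indicator (S j) \<omega>)
        = (\<lambda>j. ennreal (2^(j+1)) * indicator {x. 4^j \<le> x} (Gmax \<omega>))"
      by (intro ext) (simp add: S_def indicator_def)
    then show "ennreal (sqrt (Gmax \<omega>)) \<le> 1 + (\<Sum>j. ennreal (2^(j+1)) * indicator (S j) \<omega>)"
      using sqrt_le_dyadic_layers[OF Gmax_nonneg[of \<omega>]] by simp
  qed
  also have "\<dots> = 1 + (\<Sum>j. ennreal (2^(j+1)) * emeasure M (S j))"
    using SM by (simp add: nn_integral_add nn_integral_suminf nn_integral_cmult_indicator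
        emeasure_space_1)
  also have "\<dots> \<le> 1 + (\<Sum>j. E * ennreal (2 / 2^j))"
  proof (intro add_left_mono suminf_le summableI)
    fix j :: nat
    have "ennreal (2^(j+1)) * emeasure M (S j)
        = ennreal (2 / 2^j) * (ennreal (4^j) * emeasure M (S j))"
      by (simp only: ennreal_two_pow_Suc mult.assoc)
    also have "\<dots> \<le> ennreal (2 / 2^j) * E" by (intro mult_left_mono ville) simp
    finally show "ennreal (2^(j+1)) * emeasure M (S j) \<le> E * ennreal (2 / 2^j)"
      by (simp add: mult.commute)
  qed
  also have "\<dots> = 1 + 4 * E" by (simp add: suminf_two_over_pow2 mult.commute)
  finally show ?thesis by (simp add: Gmax_def E_def)
qed

end


locale euler_setting = prob_space M
  for M :: "'a measure" +
  fixes T c :: real and F :: "real \<Rightarrow> 'a measure"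
    and W :: "real \<Rightarrow> 'a \<Rightarrow> real^'m::finite" and \<xi> :: "'a \<Rightarrow> real^'d::finite"
    and \<mu> :: "real^'d \<Rightarrow> real^'d" and \<sigma> :: "real^'d \<Rightarrow> real^'m^'d"
  assumes T_pos: "T > 0"
    and filtration: "normal_filtration M T F"
    and brownian: "std_brownian_motion M T F W"
    and xi_meas: "\<xi> \<in> borel_measurable (F 0)"
    and xi_moments: "\<And>p. p \<ge> 1 \<Longrightarrow> integrable M (\<lambda>\<omega>. norm (\<xi> \<omega>) powr p)"
    and mu_cont: "continuous_on UNIV \<mu>"
    and c_nonneg: "0 \<le> c"
    and sigma_lip: "\<And>x y. op_norm (\<sigma> x - \<sigma> y) \<le> c * norm (x - y)"
begin

abbreviation Y :: "nat \<Rightarrow> nat \<Rightarrow> 'a \<Rightarrow> real^'d" where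
  "Y N k \<equiv> tamed_euler T \<mu> \<sigma> W \<xi> N k"

abbreviation dWn :: "nat \<Rightarrow> nat \<Rightarrow> 'a \<Rightarrow> real^'m" where
  "dWn N k \<equiv> dW T W N k"

abbreviation lamc :: real where
  "lamc \<equiv> lam c T \<mu> \<sigma>"

lemma lamc_ge_1: "1 \<le> lamc"
proof -
  have "1 \<le> 1 + 2 * c + T + norm (\<mu> 0) + op_norm (\<sigma> 0)"
    using c_nonneg T_pos op_norm_nonneg[of "\<sigma> 0"] by simp
  then show ?thesis unfolding lam_def by (rule one_le_power)
qed

lemma sigma_cont: "continuous_on UNIV \<sigma>"
proof (rule lipschitz_on_continuous_on)
  define L where "L = real CARD('d) * real CARD('m) * c"
  show "L-lipschitz_on UNIV \<sigma>"
  proof (rule lipschitz_onI)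
    fix x y :: "real^'d"
    have "dist (\<sigma> x) (\<sigma> y) \<le> real CARD('d) * real CARD('m) * op_norm (\<sigma> x - \<sigma> y)"
      by (simp add: dist_norm norm_le_op_norm)
    also have "\<dots> \<le> L * dist x y"
      using sigma_lip[of x y] by (simp add: L_def dist_norm mult_left_mono mult.assoc)
    finally show "dist (\<sigma> x) (\<sigma> y) \<le> L * dist x y" .
  qed (simp add: L_def c_nonneg)
qed

lemma sigma_meas[measurable]: "\<sigma> \<in> borel_measurable borel"
  using sigma_cont by (rule borel_measurable_continuous_onI)

definition tgrid :: "nat \<Rightarrow> nat \<Rightarrow> real" where
  "tgrid N k = real k * T / real N"

lemma tgrid_in: "k \<le> N \<Longrightarrow> 0 < N \<Longrightarrow> tgrid N k \<in> {0..T}"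
  using T_pos by (auto simp: tgrid_def field_simps intro: mult_right_mono)

lemma tgrid_mono: "k \<le> j \<Longrightarrow> tgrid N k \<le> tgrid N j"
  using T_pos by (auto simp: tgrid_def divide_right_mono intro: mult_right_mono)

lemma tgrid_less: "k < N \<Longrightarrow> tgrid N k < tgrid N (Suc k)"
  using T_pos by (simp add: tgrid_def divide_strict_right_mono)

lemma tgrid_step: "tgrid N (Suc k) - tgrid N k = T / real N"
  by (simp add: tgrid_def diff_divide_distrib[symmetric] algebra_simps)

lemma dW_tgrid: "dWn N k = (\<lambda>\<omega>. W (tgrid N (Suc k)) \<omega> - W (tgrid N k) \<omega>)"
  by (rule ext) (simp add: dW_def tgrid_def)

lemma grid_filtration: "0 < N \<Longrightarrow> finite_filtration M N (\<lambda>k. F (tgrid N k))"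
  using filtration tgrid_in tgrid_mono
  unfolding finite_filtration_def normal_filtration_def by (meson order.trans)

lemma grid_meas_mono:
  "f \<in> measurable (F (tgrid N j)) S \<Longrightarrow> j \<le> n \<Longrightarrow> n \<le> N \<Longrightarrow> 0 < N
    \<Longrightarrow> f \<in> measurable (F (tgrid N n)) S"
  using finite_filtration_measurable_mono[OF grid_filtration] by blast

lemma grid_meas_M: "f \<in> measurable (F (tgrid N n)) S \<Longrightarrow> n \<le> N \<Longrightarrow> 0 < N \<Longrightarrow> f \<in> measurable M S"
  using finite_filtration_measurable_M[OF grid_filtration] by blast

lemma dW_meas: "k < N \<Longrightarrow> dWn N k \<in> borel_measurable (F (tgrid N (Suc k)))"
proof -
  assume k: "k < N"
  have W_meas: "t \<in> {0..T} \<Longrightarrow> W t \<in> borel_measurable (F t)" for t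
    using brownian unfolding std_brownian_motion_def by simp
  have "W (tgrid N k) \<in> borel_measurable (F (tgrid N (Suc k)))"
    using grid_meas_mono[OF W_meas[OF tgrid_in]] k by auto
  moreover have "W (tgrid N (Suc k)) \<in> borel_measurable (F (tgrid N (Suc k)))"
    using k by (intro W_meas tgrid_in) auto
  ultimately show ?thesis unfolding dW_tgrid by (intro borel_measurable_diff)
qed

lemma dW_meas_M[measurable]: "k < N \<Longrightarrow> dWn N k \<in> borel_measurable M"
  using grid_meas_M[OF dW_meas] by (metis Suc_leI gr_implies_not0 neq0_conv)

lemma dW_indep_past:
  "k < N \<Longrightarrow> indep_set (sets (F (tgrid N k))) {dWn N k -` U \<inter> space M | U. U \<in> sets borel}"
  using brownian tgrid_in[of k N] tgrid_in[of "Suc k" N] tgrid_less[of k N]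
  unfolding std_brownian_motion_def dW_tgrid by simp

lemma dW_components:
  assumes k: "k < N"
  shows "indep_vars (\<lambda>_. borel) (\<lambda>i \<omega>. dWn N k \<omega> $ i) UNIV"
    and "distributed M lborel (\<lambda>\<omega>. dWn N k \<omega> $ i)
          (\<lambda>x. ennreal (normal_density 0 (sqrt (T / real N)) x))"
proof -
  have "\<forall>s\<in>{0..T}. \<forall>t\<in>{0..T}. s < t \<longrightarrow>
        indep_vars (\<lambda>_. borel) (\<lambda>i \<omega>. (W t \<omega> - W s \<omega>) $ i) UNIV \<and>
        (\<forall>i. distributed M lborel (\<lambda>\<omega>. (W t \<omega> - W s \<omega>) $ i)
               (\<lambda>x. ennreal (normal_density 0 (sqrt (t - s)) x)))"
    using brownian unfolding std_brownian_motion_def by simp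
  then have "indep_vars (\<lambda>_. borel) (\<lambda>i \<omega>. (W (tgrid N (Suc k)) \<omega> - W (tgrid N k) \<omega>) $ i) UNIV \<and>
        (\<forall>i. distributed M lborel (\<lambda>\<omega>. (W (tgrid N (Suc k)) \<omega> - W (tgrid N k) \<omega>) $ i)
               (\<lambda>x. ennreal (normal_density 0 (sqrt (tgrid N (Suc k) - tgrid N k)) x)))"
    using tgrid_in[of k N] tgrid_in[of "Suc k" N] tgrid_less[OF k] k by simp
  then show "indep_vars (\<lambda>_. borel) (\<lambda>i \<omega>. dWn N k \<omega> $ i) UNIV"
    and "distributed M lborel (\<lambda>\<omega>. dWn N k \<omega> $ i)
          (\<lambda>x. ennreal (normal_density 0 (sqrt (T / real N)) x))"
    unfolding dW_tgrid tgrid_step by auto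
qed

lemma indep_var_past_dW:
  fixes V :: "'a \<Rightarrow> 'b::second_countable_topology"
  assumes k: "k < N" and V: "V \<in> borel_measurable (F (tgrid N k))"
  shows "indep_var borel (\<lambda>\<omega>. (V \<omega>, 0::real^'m)) borel (\<lambda>\<omega>. (undefined::'b, dWn N k \<omega>))"
proof -
  have XF: "(\<lambda>\<omega>. (V \<omega>, 0::real^'m)) \<in> borel_measurable (F (tgrid N k))"
    using V by (intro borel_measurable_Pair) auto
  have XM: "(\<lambda>\<omega>. (V \<omega>, 0::real^'m)) \<in> borel_measurable M"
    using grid_meas_M[OF XF] k by simp
  have YM: "(\<lambda>\<omega>. (undefined::'b, dWn N k \<omega>)) \<in> borel_measurable M"
    using k by measurable
  have ind: "indep_sets (case_bool (sets (F (tgrid N k)))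
      {dWn N k -` U \<inter> space M | U. U \<in> sets borel}) UNIV"
    using dW_indep_past[OF k] unfolding indep_set_def .
  have sub1: "{(\<lambda>\<omega>. (V \<omega>, 0::real^'m)) -` A \<inter> space M | A. A \<in> sets borel}
      \<subseteq> sets (F (tgrid N k))"
    using XF grid_filtration[of N] k unfolding measurable_def finite_filtration_def by auto
  have sub2: "{(\<lambda>\<omega>. (undefined::'b, dWn N k \<omega>)) -` A \<inter> space M | A. A \<in> sets borel}
       \<subseteq> {dWn N k -` U \<inter> space M | U. U \<in> sets borel}"
  proof safe
    fix A :: "('b \<times> (real^'m)) set" assume A: "A \<in> sets borel"
    have "(\<lambda>x. (undefined::'b, x)) \<in> borel_measurable borel"
      by (rule borel_measurable_continuous_onI) (intro continuous_intros)
    then have "(\<lambda>x. (undefined::'b, x)) -` A \<in> sets borel"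
      using measurable_sets[OF _ A, of _ borel] by simp
    then show "\<exists>U. (\<lambda>\<omega>. (undefined::'b, dWn N k \<omega>)) -` A \<inter> space M = dWn N k -` U \<inter> space M
        \<and> U \<in> sets borel"
      by (intro exI[of _ "(\<lambda>x. (undefined::'b, x)) -` A"]) auto
  qed
  have "indep_sets (\<lambda>i. {case_bool (\<lambda>\<omega>. (V \<omega>, 0::real^'m)) (\<lambda>\<omega>. (undefined::'b, dWn N k \<omega>)) i
      -` A \<inter> space M | A. A \<in> sets (case_bool borel borel i)}) UNIV"
    by (rule indep_sets_mono_sets[OF ind]) (use sub1 sub2 in \<open>auto split: bool.split\<close>)
  then show ?thesis unfolding indep_var_def indep_vars_def2 using XM YM by (auto split: bool.split)
qed

text \<open>Integrating out an increment: for V measurable w.r.t. F(t_k), the increment over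
  [t_k, t_{k+1}] may be replaced by an independent copy (Fubini on the product law).\<close>
lemma nn_integral_integrate_out_dW:
  fixes V :: "'a \<Rightarrow> 'b::second_countable_topology" and g :: "'b \<times> (real^'m) \<Rightarrow> ennreal"
  assumes k: "k < N" and V: "V \<in> borel_measurable (F (tgrid N k))"
    and g: "g \<in> borel_measurable borel"
  shows "(\<integral>\<^sup>+\<omega>. g (V \<omega>, dWn N k \<omega>) \<partial>M) = (\<integral>\<^sup>+\<omega>. (\<integral>\<^sup>+\<omega>'. g (V \<omega>, dWn N k \<omega>') \<partial>M) \<partial>M)"
proof -
  define X where "X = (\<lambda>\<omega>. (V \<omega>, 0::real^'m))"
  define Z where "Z = (\<lambda>\<omega>. (undefined::'b, dWn N k \<omega>))"
  define g' where "g' = (\<lambda>z::('b \<times> (real^'m)) \<times> ('b \<times> (real^'m)). g (fst (fst z), snd (snd z)))"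
  have "indep_var borel X borel Z" unfolding X_def Z_def by (rule indep_var_past_dW[OF k V])
  then have XM[measurable]: "X \<in> borel_measurable M" and ZM[measurable]: "Z \<in> borel_measurable M"
    and eq: "distr M borel X \<Otimes>\<^sub>M distr M borel Z = distr M (borel \<Otimes>\<^sub>M borel) (\<lambda>x. (X x, Z x))"
    unfolding indep_var_distribution_eq by auto
  interpret D: prob_space "distr M borel Z" by (rule prob_space_distr) simp
  have "g' \<in> borel_measurable borel"
    unfolding g'_def borel_prod[symmetric] using g by measurable
  then have gm: "g' \<in> borel_measurable (borel \<Otimes>\<^sub>M borel)" by (simp add: borel_prod)
  have gm2: "g' \<in> borel_measurable (distr M borel X \<Otimes>\<^sub>M distr M borel Z)"
    using gm by (simp add: measurable_cong_sets[OF sets_pair_measure_cong[OF sets_distr sets_distr] refl])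
  have "(\<integral>\<^sup>+\<omega>. g (V \<omega>, dWn N k \<omega>) \<partial>M) = (\<integral>\<^sup>+\<omega>. g' (X \<omega>, Z \<omega>) \<partial>M)"
    by (simp add: g'_def X_def Z_def)
  also have "\<dots> = integral\<^sup>N (distr M (borel \<Otimes>\<^sub>M borel) (\<lambda>x. (X x, Z x))) g'"
    by (subst nn_integral_distr) (auto simp: gm)
  also have "\<dots> = integral\<^sup>N (distr M borel X \<Otimes>\<^sub>M distr M borel Z) g'" by (simp add: eq)
  also have "\<dots> = (\<integral>\<^sup>+ x. \<integral>\<^sup>+ y. g' (x, y) \<partial>distr M borel Z \<partial>distr M borel X)"
    by (rule D.nn_integral_fst[symmetric]) (rule gm2)
  also have "\<dots> = (\<integral>\<^sup>+ \<omega>. \<integral>\<^sup>+ y. g' (X \<omega>, y) \<partial>distr M borel Z \<partial>M)"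
    using D.borel_measurable_nn_integral_fst[OF gm2]
    by (subst nn_integral_distr) (auto simp: measurable_cong_sets[OF sets_distr refl])
  also have "\<dots> = (\<integral>\<^sup>+\<omega>. (\<integral>\<^sup>+\<omega>'. g' (X \<omega>, Z \<omega>') \<partial>M) \<partial>M)"
    by (intro nn_integral_cong, subst nn_integral_distr) (auto intro!: measurable_compose_Pair1[OF _ gm])
  also have "\<dots> = (\<integral>\<^sup>+\<omega>. (\<integral>\<^sup>+\<omega>'. g (V \<omega>, dWn N k \<omega>') \<partial>M) \<partial>M)"
    by (simp add: g'_def X_def Z_def)
  finally show ?thesis .
qed

lemma nn_integral_prod_components:
  assumes k: "k < N" and f: "\<And>i. f i \<in> borel_measurable borel" and fnn: "\<And>i x. 0 \<le> f i x"
  shows "(\<integral>\<^sup>+\<omega>. ennreal (\<Prod>i\<in>UNIV. f i (dWn N k \<omega> $ i)) \<partial>M)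
     = (\<Prod>i\<in>UNIV. \<integral>\<^sup>+x. ennreal (normal_density 0 (sqrt (T / real N)) x) * ennreal (f i x) \<partial>lborel)"
proof -
  have iv: "indep_vars (\<lambda>_. borel) (\<lambda>i \<omega>. ennreal (f i (dWn N k \<omega> $ i))) UNIV"
    using indep_vars_compose2[OF dW_components(1)[OF k], of "\<lambda>i x. ennreal (f i x)" "\<lambda>_. borel"] f
    by auto
  have "(\<integral>\<^sup>+\<omega>. ennreal (\<Prod>i\<in>UNIV. f i (dWn N k \<omega> $ i)) \<partial>M)
      = (\<integral>\<^sup>+\<omega>. (\<Prod>i\<in>UNIV. ennreal (f i (dWn N k \<omega> $ i))) \<partial>M)"
    using fnn by (simp add: prod_ennreal)
  also have "\<dots> = (\<Prod>i\<in>UNIV. \<integral>\<^sup>+\<omega>. ennreal (f i (dWn N k \<omega> $ i)) \<partial>M)"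
    by (rule indep_vars_nn_integral[OF _ iv]) auto
  also have "\<dots> = (\<Prod>i\<in>UNIV. \<integral>\<^sup>+x. ennreal (normal_density 0 (sqrt (T / real N)) x) * ennreal (f i x) \<partial>lborel)"
    by (intro prod.cong refl distributed_nn_integral[symmetric] dW_components(2)[OF k]) (use f in simp)
  finally show ?thesis .
qed

lemma dW_mgf:
  assumes k: "k < N"
  shows "(\<integral>\<^sup>+\<omega>. ennreal (exp (r * inner v (dWn N k \<omega>))) \<partial>M)
    = ennreal (exp (r^2 * (norm v)^2 * (T / real N) / 2))"
proof -
  have h: "sqrt (T / real N) > 0" using T_pos k by simp
  have "(\<integral>\<^sup>+\<omega>. ennreal (exp (r * inner v (dWn N k \<omega>))) \<partial>M)
     = (\<integral>\<^sup>+\<omega>. ennreal (\<Prod>i\<in>UNIV. exp ((r * v $ i) * (dWn N k \<omega> $ i))) \<partial>M)"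
    by (simp add: inner_vec_def exp_sum[symmetric] sum_distrib_left mult.assoc)
  also have "\<dots> = (\<Prod>i\<in>UNIV. \<integral>\<^sup>+x. ennreal (normal_density 0 (sqrt (T / real N)) x)
      * ennreal (exp ((r * v $ i) * x)) \<partial>lborel)"
    by (rule nn_integral_prod_components[OF k]) auto
  also have "\<dots> = (\<Prod>i\<in>UNIV. ennreal (exp ((r * v $ i)^2 * (sqrt (T / real N))^2 / 2)))"
    by (intro prod.cong refl normal_mgf h)
  also have "\<dots> = ennreal (exp (\<Sum>i\<in>UNIV. (r^2 * (T / real N) / 2) * (v $ i)^2))"
    using T_pos k by (simp add: prod_ennreal exp_sum power_mult_distrib ac_simps)
  also have "(\<Sum>i\<in>UNIV. (r^2 * (T / real N) / 2) * (v $ i)^2) = (r^2 * (T / real N) / 2) * (norm v)^2"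
    by (simp only: sum_distrib_left[symmetric] norm_square_vec_eq)
  finally show ?thesis by (simp add: ac_simps)
qed

lemma dW_square_mgf:
  assumes k: "k < N" and s: "0 \<le> s" and sh: "4 * s * (T / real N) \<le> 1"
  shows "(\<integral>\<^sup>+\<omega>. ennreal (exp (s * (norm (dWn N k \<omega>))^2)) \<partial>M)
    \<le> ennreal (exp (4 * s * (T / real N) * CARD('m)))"
proof -
  define h where "h = T / real N"
  have hpos: "h > 0" using T_pos k by (simp add: h_def)
  have sq: "(sqrt h)^2 = h" using hpos by simp
  have x: "0 \<le> 2 * s * h" "2 * s * h \<le> 1/2"
    using s hpos sh by (simp_all add: h_def[symmetric])
  have "(\<integral>\<^sup>+\<omega>. ennreal (exp (s * (norm (dWn N k \<omega>))^2)) \<partial>M)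
     = (\<integral>\<^sup>+\<omega>. ennreal (\<Prod>i\<in>UNIV. exp (s * (dWn N k \<omega> $ i)^2)) \<partial>M)"
    by (simp add: norm_square_vec_eq sum_distrib_left exp_sum)
  also have "\<dots> = (\<Prod>i\<in>(UNIV::'m set). \<integral>\<^sup>+x. ennreal (normal_density 0 (sqrt h) x)
      * ennreal (exp (s * x^2)) \<partial>lborel)"
    using nn_integral_prod_components[OF k, of "\<lambda>i x. exp (s * x^2)"] by (simp add: h_def)
  also have "\<dots> = (\<Prod>i\<in>(UNIV::'m set). ennreal (1 / sqrt (1 - 2 * s * h)))"
    using normal_square_mgf[of "sqrt h" s] hpos x by (simp add: sq)
  also have "\<dots> \<le> (\<Prod>i\<in>(UNIV::'m set). ennreal (exp (4 * s * h)))"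
  proof -
    have "1 / sqrt (1 - 2 * s * h) \<le> exp (4 * s * h)"
      using inv_sqrt_one_minus_le_exp[OF x] by (simp add: mult.assoc)
    then show ?thesis by (simp add: ennreal_leI power_mono)
  qed
  also have "\<dots> = ennreal (exp (4 * s * h) ^ CARD('m))"
    by (simp add: ennreal_power)
  also have "exp (4 * s * h) ^ CARD('m) = exp (4 * s * h * CARD('m))"
    by (simp add: exp_of_nat_mult[symmetric] ac_simps)
  finally show ?thesis by (simp add: h_def)
qed


lemma tamed_step_cont:
  assumes h: "0 \<le> h"
  shows "continuous_on UNIV (\<lambda>x::(real^'d) \<times> (real^'m).
    fst x + (h / (1 + h * norm (\<mu> (fst x)))) *\<^sub>R \<mu> (fst x) + \<sigma> (fst x) *v snd x)"
proof -
  have c1: "continuous_on UNIV (\<lambda>x::(real^'d) \<times> (real^'m). \<mu> (fst x))"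
    using continuous_on_compose2[OF mu_cont continuous_on_fst[OF continuous_on_id], of UNIV] by simp
  have c2: "continuous_on UNIV (\<lambda>x::(real^'d) \<times> (real^'m). \<sigma> (fst x))"
    using continuous_on_compose2[OF sigma_cont continuous_on_fst[OF continuous_on_id], of UNIV] by simp
  have c3: "continuous_on UNIV (\<lambda>x::(real^'d) \<times> (real^'m). \<sigma> (fst x) *v snd x)"
    using continuous_on_compose2[OF continuous_matrix_vector_mult, of UNIV "\<lambda>x. (\<sigma> (fst x), snd x)"]
      continuous_on_Pair[OF c2 continuous_on_snd[OF continuous_on_id]]
    by auto
  have "1 + h * norm (\<mu> (fst x)) \<noteq> 0" for x :: "(real^'d) \<times> (real^'m)"
    using h by (metis add_pos_nonneg less_irrefl mult_nonneg_nonneg norm_ge_zero zero_less_one)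
  then show ?thesis
    using c1 c3 by (intro continuous_on_add continuous_on_scaleR continuous_on_divide
        continuous_on_fst continuous_on_id continuous_on_const continuous_on_mult continuous_on_norm) auto
qed

lemma Y_meas: "k \<le> N \<Longrightarrow> 0 < N \<Longrightarrow> Y N k \<in> borel_measurable (F (tgrid N k))"
proof (induction k)
  case 0
  then show ?case using xi_meas by (simp add: tgrid_def)
next
  case (Suc k)
  have Yk: "Y N k \<in> borel_measurable (F (tgrid N (Suc k)))"
    using grid_meas_mono[OF Suc.IH] Suc.prems by simp
  have dWk: "dWn N k \<in> borel_measurable (F (tgrid N (Suc k)))" using Suc.prems by (intro dW_meas) simp
  have "0 \<le> T / real N" using T_pos by simp
  from borel_measurable_continuous_Pair[OF Yk dWk tamed_step_cont[OF this, unfolded split_beta']]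
  show ?case by (simp add: Let_def)
qed

lemma xi_meas_M[measurable]: "\<xi> \<in> borel_measurable M"
proof -
  have "tgrid 1 0 = 0" by (simp add: tgrid_def)
  then have "\<xi> \<in> borel_measurable (F (tgrid 1 0))" using xi_meas by simp
  then show ?thesis by (rule grid_meas_M) simp_all
qed

definition bcoef :: "real^'d \<Rightarrow> real^'m" where
  "bcoef y = (if 1 \<le> norm y then (1 / (norm y)^2) *\<^sub>R (y v* \<sigma> y) else 0)"

definition Kb :: real where
  "Kb = op_norm (\<sigma> 0) + c"

lemma bcoef_meas[measurable]: "bcoef \<in> borel_measurable borel"
proof -
  have "(\<lambda>y. (\<lambda>x. snd x v* fst x) (\<sigma> y, y)) \<in> borel_measurable borel"
    using borel_measurable_continuous_Pair[of \<sigma> borel "\<lambda>y. y" "\<lambda>A y. y v* A", OF sigma_meas]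
      continuous_vector_matrix_mult
    by (simp add: split_beta')
  then have [measurable]: "(\<lambda>y. y v* \<sigma> y) \<in> borel_measurable borel" by simp
  show ?thesis unfolding bcoef_def by measurable
qed

lemma bcoef_Y_meas: "k \<le> N \<Longrightarrow> 0 < N \<Longrightarrow> (\<lambda>\<omega>. bcoef (Y N k \<omega>)) \<in> borel_measurable (F (tgrid N k))"
  using measurable_compose[OF Y_meas bcoef_meas] by blast

lemma alphaN_eq: "alphaN T \<mu> \<sigma> W \<xi> N k \<omega> = inner (bcoef (Y N k \<omega>)) (dWn N k \<omega>)"
proof (cases "1 \<le> norm (Y N k \<omega>)")
  case True
  define y where "y = Y N k \<omega>"
  have "inner ((1 / norm y) *\<^sub>R y) ((1 / norm y) *\<^sub>R (\<sigma> y *v dWn N k \<omega>))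
      = inner ((1 / (norm y)^2) *\<^sub>R (y v* \<sigma> y)) (dWn N k \<omega>)"
    by (simp add: power2_eq_square dot_lmul_matrix)
  then show ?thesis using True by (simp add: alphaN_def bcoef_def y_def Let_def)
qed (simp add: alphaN_def bcoef_def Let_def)

text \<open>Linear growth of sigma makes the coefficients uniformly bounded.\<close>
lemma bcoef_bound: "norm (bcoef y) \<le> Kb"
proof (cases "1 \<le> norm y")
  case True
  have ny: "norm y > 0" using True by linarith
  have "op_norm (\<sigma> y) \<le> op_norm (\<sigma> 0) + op_norm (\<sigma> y - \<sigma> 0)"
    using op_norm_triangle[of "\<sigma> 0" "\<sigma> y - \<sigma> 0"] by simp
  also have "\<dots> \<le> op_norm (\<sigma> 0) + c * norm y" using sigma_lip[of y 0] by simp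
  finally have growth: "op_norm (\<sigma> y) \<le> op_norm (\<sigma> 0) + c * norm y" .
  have "norm (bcoef y) = norm (y v* \<sigma> y) / (norm y)^2" using True by (simp add: bcoef_def)
  also have "\<dots> \<le> op_norm (\<sigma> y) * norm y / (norm y)^2"
    by (intro divide_right_mono norm_vector_matrix_le) simp
  also have "\<dots> = op_norm (\<sigma> y) / norm y" using ny by (simp add: power2_eq_square)
  also have "\<dots> \<le> (op_norm (\<sigma> 0) + c * norm y) / norm y"
    using growth ny by (simp add: divide_right_mono)
  also have "\<dots> = op_norm (\<sigma> 0) / norm y + c" using ny by (simp add: field_simps)
  also have "\<dots> \<le> op_norm (\<sigma> 0) / 1 + c"
    using True op_norm_nonneg[of "\<sigma> 0"] by (intro add_right_mono divide_left_mono) auto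
  finally show ?thesis by (simp add: Kb_def)
next
  case False
  then show ?thesis using op_norm_nonneg[of "\<sigma> 0"] c_nonneg by (simp add: bcoef_def Kb_def)
qed

text \<open>Conditionally on F(t_k), <b_k, Delta W_k> is centred Gaussian with variance |b_k|^2 h.\<close>
lemma integrate_out_linear:
  assumes k: "k < N" and Z: "Z \<in> borel_measurable (F (tgrid N k))"
  shows "(\<integral>\<^sup>+\<omega>. Z \<omega> * ennreal (exp (r * inner (bcoef (Y N k \<omega>)) (dWn N k \<omega>))) \<partial>M)
    = (\<integral>\<^sup>+\<omega>. Z \<omega> * ennreal (exp (r^2 * (norm (bcoef (Y N k \<omega>)))^2 * (T / real N) / 2)) \<partial>M)"
proof -
  define g where "g = (\<lambda>x::(ennreal \<times> (real^'m)) \<times> (real^'m).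
    fst (fst x) * ennreal (exp (r * inner (snd (fst x)) (snd x))))"
  have gm: "g \<in> borel_measurable borel"
    unfolding g_def borel_prod[symmetric] by measurable
  have V: "(\<lambda>\<omega>. (Z \<omega>, bcoef (Y N k \<omega>))) \<in> borel_measurable (F (tgrid N k))"
    using Z bcoef_Y_meas[of k N] k unfolding borel_prod[symmetric] by simp
  have "(\<integral>\<^sup>+\<omega>. Z \<omega> * ennreal (exp (r * inner (bcoef (Y N k \<omega>)) (dWn N k \<omega>))) \<partial>M)
      = (\<integral>\<^sup>+\<omega>. (\<integral>\<^sup>+\<omega>'. g ((Z \<omega>, bcoef (Y N k \<omega>)), dWn N k \<omega>') \<partial>M) \<partial>M)"
    using nn_integral_integrate_out_dW[OF k V gm] by (simp add: g_def)
  also have "\<dots> = (\<integral>\<^sup>+\<omega>. Z \<omega> * ennreal (exp (r^2 * (norm (bcoef (Y N k \<omega>)))^2 * (T / real N) / 2)) \<partial>M)"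
    using k by (intro nn_integral_cong)
      (simp add: g_def nn_integral_cmult dW_mgf[OF k])
  finally show ?thesis .
qed

lemma integrate_out_square:
  assumes k: "k < N" and Z: "Z \<in> borel_measurable (F (tgrid N k))"
    and s: "0 \<le> s" and sh: "4 * s * (T / real N) \<le> 1"
  shows "(\<integral>\<^sup>+\<omega>. Z \<omega> * ennreal (exp (s * (norm (dWn N k \<omega>))^2)) \<partial>M)
    \<le> (\<integral>\<^sup>+\<omega>. Z \<omega> \<partial>M) * ennreal (exp (4 * s * (T / real N) * CARD('m)))"
proof -
  define g where "g = (\<lambda>x::ennreal \<times> (real^'m). fst x * ennreal (exp (s * (norm (snd x))^2)))"
  have gm: "g \<in> borel_measurable borel"
    unfolding g_def borel_prod[symmetric] by measurable
  have "(\<integral>\<^sup>+\<omega>. Z \<omega> * ennreal (exp (s * (norm (dWn N k \<omega>))^2)) \<partial>M)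
      = (\<integral>\<^sup>+\<omega>. (\<integral>\<^sup>+\<omega>'. g (Z \<omega>, dWn N k \<omega>') \<partial>M) \<partial>M)"
    using nn_integral_integrate_out_dW[OF k Z gm] by (simp add: g_def)
  also have "\<dots> = (\<integral>\<^sup>+\<omega>. Z \<omega> * (\<integral>\<^sup>+\<omega>'. ennreal (exp (s * (norm (dWn N k \<omega>'))^2)) \<partial>M) \<partial>M)"
    using k by (intro nn_integral_cong) (simp add: g_def nn_integral_cmult)
  also have "\<dots> \<le> (\<integral>\<^sup>+\<omega>. Z \<omega> * ennreal (exp (4 * s * (T / real N) * CARD('m))) \<partial>M)"
    by (intro nn_integral_mono mult_left_mono dW_square_mgf[OF k s sh]) simp
  also have "\<dots> = (\<integral>\<^sup>+\<omega>. Z \<omega> \<partial>M) * ennreal (exp (4 * s * (T / real N) * CARD('m)))"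
    using grid_meas_M[OF Z] k by (simp add: nn_integral_multc)
  finally show ?thesis .
qed

subsection \<open>The exponential submartingale exp(r A_n)\<close>

definition Amart :: "nat \<Rightarrow> nat \<Rightarrow> 'a \<Rightarrow> real" where
  "Amart N n \<omega> = (\<Sum>k<n. inner (bcoef (Y N k \<omega>)) (dWn N k \<omega>))"

definition expA :: "real \<Rightarrow> nat \<Rightarrow> nat \<Rightarrow> 'a \<Rightarrow> real" where
  "expA r N n \<omega> = exp (r * Amart N n \<omega>)"

lemma Amart_meas: "n \<le> N \<Longrightarrow> Amart N n \<in> borel_measurable (F (tgrid N n))"
proof -
  assume n: "n \<le> N"
  have "(\<lambda>\<omega>. inner (bcoef (Y N k \<omega>)) (dWn N k \<omega>)) \<in> borel_measurable (F (tgrid N n))"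
    if k: "k < n" for k
  proof -
    have [measurable]: "(\<lambda>\<omega>. bcoef (Y N k \<omega>)) \<in> borel_measurable (F (tgrid N n))"
      using grid_meas_mono[OF bcoef_Y_meas] k n by simp
    have [measurable]: "dWn N k \<in> borel_measurable (F (tgrid N n))"
      using grid_meas_mono[OF dW_meas] k n by simp
    show ?thesis by measurable
  qed
  then show ?thesis unfolding Amart_def by (intro borel_measurable_sum) simp
qed

lemma expA_meas: "n \<le> N \<Longrightarrow> expA r N n \<in> borel_measurable (F (tgrid N n))"
  unfolding expA_def using Amart_meas[of n N] by measurable

lemma expA_nonneg: "0 \<le> expA r N n \<omega>"
  by (simp add: expA_def)

lemma expA_Suc:
  "expA r N (Suc n) \<omega> = expA r N n \<omega> * exp (r * inner (bcoef (Y N n \<omega>)) (dWn N n \<omega>))"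
  by (simp add: expA_def Amart_def distrib_left exp_add)

lemma expA_submart_step:
  assumes n: "n < N" and g: "g \<in> borel_measurable (F (tgrid N n))"
  shows "(\<integral>\<^sup>+\<omega>. g \<omega> * ennreal (expA r N n \<omega>) \<partial>M) \<le> (\<integral>\<^sup>+\<omega>. g \<omega> * ennreal (expA r N (Suc n) \<omega>) \<partial>M)"
proof -
  have Zm: "(\<lambda>\<omega>. g \<omega> * ennreal (expA r N n \<omega>)) \<in> borel_measurable (F (tgrid N n))"
    using g expA_meas[of n N r, OF less_imp_le[OF n]] by measurable
  have "(\<integral>\<^sup>+\<omega>. g \<omega> * ennreal (expA r N n \<omega>) \<partial>M)
      \<le> (\<integral>\<^sup>+\<omega>. (g \<omega> * ennreal (expA r N n \<omega>))
          * ennreal (exp (r^2 * (norm (bcoef (Y N n \<omega>)))^2 * (T / real N) / 2)) \<partial>M)"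
  proof (intro nn_integral_mono)
    fix \<omega>
    have "0 \<le> r^2 * (norm (bcoef (Y N n \<omega>)))^2 * (T / real N) / 2" using T_pos by simp
    then have "(1::ennreal) \<le> ennreal (exp (r^2 * (norm (bcoef (Y N n \<omega>)))^2 * (T / real N) / 2))"
      by (simp add: ennreal_leI)
    from mult_left_mono[OF this, of "g \<omega> * ennreal (expA r N n \<omega>)"]
    show "g \<omega> * ennreal (expA r N n \<omega>) \<le> g \<omega> * ennreal (expA r N n \<omega>)
        * ennreal (exp (r^2 * (norm (bcoef (Y N n \<omega>)))^2 * (T / real N) / 2))"
      by simp
  qed
  also have "\<dots> = (\<integral>\<^sup>+\<omega>. (g \<omega> * ennreal (expA r N n \<omega>))
      * ennreal (exp (r * inner (bcoef (Y N n \<omega>)) (dWn N n \<omega>))) \<partial>M)"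
    by (rule integrate_out_linear[OF n Zm, symmetric])
  also have "\<dots> = (\<integral>\<^sup>+\<omega>. g \<omega> * ennreal (expA r N (Suc n) \<omega>) \<partial>M)"
    by (simp add: expA_Suc ennreal_mult mult.assoc expA_nonneg)
  finally show ?thesis .
qed

lemma expA_submart:
  assumes jn: "j \<le> n" and nN: "n \<le> N" and g: "g \<in> borel_measurable (F (tgrid N j))"
  shows "(\<integral>\<^sup>+\<omega>. g \<omega> * ennreal (expA r N j \<omega>) \<partial>M) \<le> (\<integral>\<^sup>+\<omega>. g \<omega> * ennreal (expA r N n \<omega>) \<partial>M)"
  using jn nN
proof (induction n rule: dec_induct)
  case (step n)
  have "g \<in> borel_measurable (F (tgrid N n))"
    using grid_meas_mono[OF g] step by simp
  then show ?case using step expA_submart_step[of n N g r] by (meson Suc_le_lessD Suc_leD order_trans)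
qed simp

text \<open>Since |b_k| \<le> K, each step multiplies E exp(r A_n) by at most exp(r^2 K^2 h / 2).\<close>
lemma expA_expectation:
  assumes nN: "n \<le> N" and N: "0 < N"
  shows "(\<integral>\<^sup>+\<omega>. ennreal (expA r N n \<omega>) \<partial>M) \<le> ennreal (exp (r^2 * Kb^2 * (T / real N) / 2)) ^ n"
  using nN
proof (induction n)
  case 0
  then show ?case by (simp add: expA_def Amart_def emeasure_space_1)
next
  case (Suc n)
  define q where "q = exp (r^2 * Kb^2 * (T / real N) / 2)"
  have n: "n < N" using Suc by simp
  have Zm: "(\<lambda>\<omega>. ennreal (expA r N n \<omega>)) \<in> borel_measurable (F (tgrid N n))"
    using expA_meas[of n N r, OF less_imp_le[OF n]] by measurable
  have step: "exp (r^2 * (norm (bcoef (Y N n \<omega>)))^2 * (T / real N) / 2) \<le> q" for \<omega>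
  proof -
    have "(norm (bcoef (Y N n \<omega>)))^2 \<le> Kb^2" by (intro power_mono bcoef_bound) simp
    then show ?thesis
      unfolding q_def using T_pos by (simp add: divide_right_mono mult_left_mono mult_right_mono)
  qed
  have "(\<integral>\<^sup>+\<omega>. ennreal (expA r N (Suc n) \<omega>) \<partial>M)
      = (\<integral>\<^sup>+\<omega>. ennreal (expA r N n \<omega>) * ennreal (exp (r * inner (bcoef (Y N n \<omega>)) (dWn N n \<omega>))) \<partial>M)"
    by (simp add: expA_Suc ennreal_mult expA_nonneg)
  also have "\<dots> = (\<integral>\<^sup>+\<omega>. ennreal (expA r N n \<omega>)
      * ennreal (exp (r^2 * (norm (bcoef (Y N n \<omega>)))^2 * (T / real N) / 2)) \<partial>M)"
    by (rule integrate_out_linear[OF n Zm])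
  also have "\<dots> \<le> (\<integral>\<^sup>+\<omega>. ennreal (expA r N n \<omega>) * ennreal q \<partial>M)"
    by (intro nn_integral_mono mult_left_mono ennreal_leI step) simp
  also have "\<dots> = (\<integral>\<^sup>+\<omega>. ennreal (expA r N n \<omega>) \<partial>M) * ennreal q"
    using grid_meas_M[OF Zm] n by (simp add: nn_integral_multc)
  also have "\<dots> \<le> ennreal q ^ n * ennreal q"
    using Suc by (intro mult_right_mono) (auto simp: q_def)
  finally show ?case by (simp add: q_def mult.commute)
qed

definition max_term :: "real \<Rightarrow> nat \<Rightarrow> 'a \<Rightarrow> real" where
  "max_term r N \<omega> = sqrt (Max ((\<lambda>n. expA r N n \<omega>) ` {0..N}))"

lemma exp_Amart_le_max_term: "n \<le> N \<Longrightarrow> exp (r * Amart N n \<omega>) \<le> max_term (2 * r) N \<omega>"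
proof -
  assume n: "n \<le> N"
  have "exp (r * Amart N n \<omega>) = sqrt (expA (2 * r) N n \<omega>)"
    using sqrt_exp_double[of "r * Amart N n \<omega>"] by (simp add: expA_def mult.assoc)
  also have "\<dots> \<le> max_term (2 * r) N \<omega>"
    unfolding max_term_def using n by (intro real_sqrt_le_mono Max_ge) auto
  finally show ?thesis .
qed

lemma max_term_bound:
  assumes N: "0 < N"
  shows "(\<integral>\<^sup>+\<omega>. ennreal (max_term r N \<omega>) \<partial>M) \<le> 1 + 4 * ennreal (exp (r^2 * Kb^2 * T / 2))"
proof -
  have "(\<integral>\<^sup>+\<omega>. ennreal (max_term r N \<omega>) \<partial>M) \<le> 1 + 4 * (\<integral>\<^sup>+\<omega>. ennreal (expA r N N \<omega>) \<partial>M)"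
    unfolding max_term_def
    by (rule sqrt_max_bound[OF grid_filtration[OF N] expA_meas _ expA_submart]) (auto simp: expA_nonneg)
  also have "(\<integral>\<^sup>+\<omega>. ennreal (expA r N N \<omega>) \<partial>M) \<le> ennreal (exp (r^2 * Kb^2 * (T / real N) / 2)) ^ N"
    using expA_expectation[OF order_refl N] .
  also have "\<dots> = ennreal (exp (r^2 * Kb^2 * T / 2))"
    using N by (simp add: ennreal_power exp_of_nat_mult[symmetric])
  finally show ?thesis by (simp add: mult_left_mono add_left_mono)
qed

lemma max_term_nonneg: "0 \<le> max_term r N \<omega>"
proof -
  have "expA r N 0 \<omega> \<le> Max ((\<lambda>n. expA r N n \<omega>) ` {0..N})" by (intro Max_ge) auto
  then have "0 \<le> Max ((\<lambda>n. expA r N n \<omega>) ` {0..N})" using expA_nonneg[of r N 0 \<omega>] by linarith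
  then show ?thesis unfolding max_term_def by simp
qed

lemma max_term_meas: "0 < N \<Longrightarrow> max_term r N \<in> borel_measurable M"
proof -
  assume N: "0 < N"
  have [measurable]: "n \<in> {0..N} \<Longrightarrow> expA r N n \<in> borel_measurable M" for n
    using grid_meas_M[OF expA_meas] N by simp
  show ?thesis unfolding max_term_def by measurable
qed

definition qsum :: "nat \<Rightarrow> nat \<Rightarrow> 'a \<Rightarrow> real" where
  "qsum N n \<omega> = (\<Sum>k<n. (norm (dWn N k \<omega>))^2)"

lemma qsum_meas: "n \<le> N \<Longrightarrow> 0 < N \<Longrightarrow> qsum N n \<in> borel_measurable (F (tgrid N n))"
proof -
  assume n: "n \<le> N" "0 < N"
  have "(\<lambda>\<omega>. (norm (dWn N k \<omega>))^2) \<in> borel_measurable (F (tgrid N n))" if "k < n" for k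
    using grid_meas_mono[OF dW_meas] that n by (simp add: borel_measurable_power)
  then show ?thesis unfolding qsum_def by (intro borel_measurable_sum) simp
qed

lemma qsum_mgf:
  assumes N: "0 < N" and s: "0 \<le> s" and sh: "4 * s * (T / real N) \<le> 1" and nN: "n \<le> N"
  shows "(\<integral>\<^sup>+\<omega>. ennreal (exp (s * qsum N n \<omega>)) \<partial>M)
     \<le> ennreal (exp (4 * s * (T / real N) * CARD('m))) ^ n"
  using nN
proof (induction n)
  case 0
  then show ?case by (simp add: qsum_def emeasure_space_1)
next
  case (Suc n)
  have n: "n < N" using Suc by simp
  have Zm: "(\<lambda>\<omega>. ennreal (exp (s * qsum N n \<omega>))) \<in> borel_measurable (F (tgrid N n))"
    using qsum_meas[of n N, OF less_imp_le[OF n] N] by measurable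
  have "(\<integral>\<^sup>+\<omega>. ennreal (exp (s * qsum N (Suc n) \<omega>)) \<partial>M)
     = (\<integral>\<^sup>+\<omega>. ennreal (exp (s * qsum N n \<omega>)) * ennreal (exp (s * (norm (dWn N n \<omega>))^2)) \<partial>M)"
    by (simp add: qsum_def distrib_left exp_add ennreal_mult)
  also have "\<dots> \<le> (\<integral>\<^sup>+\<omega>. ennreal (exp (s * qsum N n \<omega>)) \<partial>M)
      * ennreal (exp (4 * s * (T / real N) * CARD('m)))"
    by (rule integrate_out_square[OF n Zm s sh])
  also have "\<dots> \<le> ennreal (exp (4 * s * (T / real N) * CARD('m))) ^ n
      * ennreal (exp (4 * s * (T / real N) * CARD('m)))"
    using Suc by (intro mult_right_mono) auto
  finally show ?case by (simp add: mult.commute)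
qed

lemma qsum_mgf_total:
  assumes N: "0 < N" and s: "0 \<le> s" and sh: "4 * s * (T / real N) \<le> 1"
  shows "(\<integral>\<^sup>+\<omega>. ennreal (exp (s * qsum N N \<omega>)) \<partial>M) \<le> ennreal (exp (4 * s * T * CARD('m)))"
proof -
  have "ennreal (exp (4 * s * (T / real N) * CARD('m))) ^ N = ennreal (exp (4 * s * T * CARD('m)))"
    using N by (simp add: ennreal_power exp_of_nat_mult[symmetric])
  then show ?thesis using qsum_mgf[OF N s sh order_refl] by simp
qed

lemma DN_eq:
  "DN c T \<mu> \<sigma> W \<xi> N n \<omega> = (lamc + norm (\<xi> \<omega>)) * exp (lamc + Max ((\<lambda>u.
      lamc * (\<Sum>k\<in>{u..<n}. (norm (dWn N k \<omega>))^2) + (Amart N n \<omega> - Amart N u \<omega>)) ` {0..n}))"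
proof -
  have "(\<Sum>k\<in>{u..<n}. lamc * (norm (dWn N k \<omega>))\<^sup>2 + alphaN T \<mu> \<sigma> W \<xi> N k \<omega>)
      = lamc * (\<Sum>k\<in>{u..<n}. (norm (dWn N k \<omega>))^2) + (Amart N n \<omega> - Amart N u \<omega>)"
    if "u \<in> {0..n}" for u
  proof -
    have "(\<Sum>k\<in>{u..<n}. inner (bcoef (Y N k \<omega>)) (dWn N k \<omega>)) = Amart N n \<omega> - Amart N u \<omega>"
      unfolding Amart_def lessThan_atLeast0 using that by (subst sum_diff_nat_ivl) auto
    then show ?thesis by (simp add: sum.distrib sum_distrib_left alphaN_eq)
  qed
  then have "(\<lambda>u. \<Sum>k\<in>{u..<n}. lamc * (norm (dWn N k \<omega>))\<^sup>2 + alphaN T \<mu> \<sigma> W \<xi> N k \<omega>) ` {0..n}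
      = (\<lambda>u. lamc * (\<Sum>k\<in>{u..<n}. (norm (dWn N k \<omega>))^2) + (Amart N n \<omega> - Amart N u \<omega>)) ` {0..n}"
    by (rule image_cong[OF refl])
  then show ?thesis unfolding DN_def Let_def by (simp only:)
qed

lemma max_exponent_le:
  assumes n: "n \<le> N"
  shows "\<exists>u\<le>n. Max ((\<lambda>u. lamc * (\<Sum>k\<in>{u..<n}. (norm (dWn N k \<omega>))^2)
      + (Amart N n \<omega> - Amart N u \<omega>)) ` {0..n}) \<le> lamc * qsum N N \<omega> + Amart N n \<omega> - Amart N u \<omega>"
proof -
  define f where "f u = lamc * (\<Sum>k\<in>{u..<n}. (norm (dWn N k \<omega>))^2) + (Amart N n \<omega> - Amart N u \<omega>)"
    for u
  have "Max (f ` {0..n}) \<in> f ` {0..n}" by (rule Max_in) auto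
  then obtain u where u: "Max (f ` {0..n}) = f u" "u \<in> {0..n}" by (rule imageE)
  have "(\<Sum>k\<in>{u..<n}. (norm (dWn N k \<omega>))^2) \<le> qsum N N \<omega>"
    unfolding qsum_def using n by (intro sum_mono2) auto
  then have "f u \<le> lamc * qsum N N \<omega> + Amart N n \<omega> - Amart N u \<omega>"
    using lamc_ge_1 by (simp add: f_def mult_left_mono)
  then show ?thesis using u unfolding f_def by auto
qed

definition init_term :: "real \<Rightarrow> 'a \<Rightarrow> real" where
  "init_term p \<omega> = (lamc + norm (\<xi> \<omega>)) powr (6 * p) * exp (6 * p * lamc)"

lemma init_term_nonneg: "0 \<le> init_term p \<omega>"
  by (simp add: init_term_def)

lemma init_term_meas[measurable]: "init_term p \<in> borel_measurable M"
  unfolding init_term_def by measurable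

lemma DN_pathwise:
  assumes n: "n \<le> N" and p: "0 < p"
  shows "\<bar>DN c T \<mu> \<sigma> W \<xi> N n \<omega>\<bar> powr p \<le> exp (2 * p * lamc * qsum N N \<omega>) + init_term p \<omega>
    + max_term (12 * p) N \<omega> + max_term (- 12 * p) N \<omega>"
proof -
  define Mx where "Mx = Max ((\<lambda>u. lamc * (\<Sum>k\<in>{u..<n}. (norm (dWn N k \<omega>))^2)
      + (Amart N n \<omega> - Amart N u \<omega>)) ` {0..n})"
  obtain u where u: "u \<le> n" and Mx: "Mx \<le> lamc * qsum N N \<omega> + Amart N n \<omega> - Amart N u \<omega>"
    using max_exponent_le[OF n] unfolding Mx_def by blast
  define x where "x = (lamc + norm (\<xi> \<omega>)) powr p * exp (p * lamc)"
  define y where "y = exp (p * lamc * qsum N N \<omega>)"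
  define z where "z = exp (p * Amart N n \<omega>)"
  define w where "w = exp (- p * Amart N u \<omega>)"
  have pos: "0 < lamc + norm (\<xi> \<omega>)" using lamc_ge_1 by (simp add: add_pos_nonneg)
  have "\<bar>DN c T \<mu> \<sigma> W \<xi> N n \<omega>\<bar> powr p = (lamc + norm (\<xi> \<omega>)) powr p * exp ((lamc + Mx) * p)"
    unfolding DN_eq Mx_def[symmetric] using pos by (simp add: powr_mult exp_powr_real abs_mult)
  also have "\<dots> \<le> (lamc + norm (\<xi> \<omega>)) powr p
      * exp (p * lamc + p * lamc * qsum N N \<omega> + p * Amart N n \<omega> + (- p * Amart N u \<omega>))"
  proof (intro mult_left_mono)
    have "(lamc + Mx) * p \<le> (lamc + (lamc * qsum N N \<omega> + Amart N n \<omega> - Amart N u \<omega>)) * p"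
      using Mx p by (intro mult_right_mono) auto
    then show "exp ((lamc + Mx) * p)
        \<le> exp (p * lamc + p * lamc * qsum N N \<omega> + p * Amart N n \<omega> + (- p * Amart N u \<omega>))"
      by (simp add: algebra_simps)
  qed simp
  also have "\<dots> = x * y * z * w"
    by (simp add: x_def y_def z_def w_def exp_add exp_diff exp_minus field_simps)
  also have "\<dots> \<le> y^2 + x^6 + z^6 + w^6"
    by (rule prod4_le_square_sixth_powers) (simp_all add: x_def y_def z_def w_def)
  also have "y^2 = exp (2 * p * lamc * qsum N N \<omega>)"
    by (simp add: y_def exp_of_nat_mult[symmetric] mult.assoc)
  also have "x^6 = init_term p \<omega>"
    using pos by (simp add: x_def init_term_def power_mult_distrib powr_power
        exp_of_nat_mult[symmetric] mult.assoc)
  also have "z^6 = exp ((6 * p) * Amart N n \<omega>)"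
    by (simp add: z_def exp_of_nat_mult[symmetric] mult.assoc)
  also have "\<dots> \<le> max_term (12 * p) N \<omega>"
    using exp_Amart_le_max_term[OF n, of "6 * p"] by simp
  also have "w^6 = exp ((- 6 * p) * Amart N u \<omega>)"
    by (simp add: w_def exp_of_nat_mult[symmetric] mult.assoc)
  also have "\<dots> \<le> max_term (- 12 * p) N \<omega>"
    using exp_Amart_le_max_term[of u N "- 6 * p"] u n by simp
  finally show ?thesis by simp
qed

lemma max_DN_pathwise:
  assumes p: "0 < p"
  shows "Max ((\<lambda>n. \<bar>DN c T \<mu> \<sigma> W \<xi> N n \<omega>\<bar> powr p) ` {0..N}) \<le> exp (2 * p * lamc * qsum N N \<omega>)
    + init_term p \<omega> + max_term (12 * p) N \<omega> + max_term (- 12 * p) N \<omega>"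
  using DN_pathwise[of _ N p \<omega>] p by (subst Max_le_iff) auto

lemma init_term_le:
  assumes p: "0 \<le> p"
  shows "init_term p \<omega> \<le> exp (6 * p * lamc) * 2 powr (6 * p) * (lamc powr (6 * p) + norm (\<xi> \<omega>) powr (6 * p))"
proof -
  have "0 \<le> lamc" using lamc_ge_1 by simp
  then have "(lamc + norm (\<xi> \<omega>)) powr (6 * p) \<le> 2 powr (6 * p) * (lamc powr (6 * p) + norm (\<xi> \<omega>) powr (6 * p))"
    using p by (intro powr_add_le) auto
  then show ?thesis unfolding init_term_def by (simp add: mult_right_mono mult.commute mult.left_commute)
qed

lemma init_term_finite:
  assumes p: "1 \<le> p"
  shows "(\<integral>\<^sup>+\<omega>. ennreal (init_term p \<omega>) \<partial>M) < \<infinity>"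
proof -
  define q where "q = 6 * p"
  define a where "a = exp (q * lamc) * 2 powr q"
  have a: "0 \<le> a" by (simp add: a_def)
  have int: "integrable M (\<lambda>\<omega>. norm (\<xi> \<omega>) powr q)" using xi_moments p by (simp add: q_def)
  have "(\<integral>\<^sup>+\<omega>. ennreal (init_term p \<omega>) \<partial>M)
      \<le> (\<integral>\<^sup>+\<omega>. ennreal (a * lamc powr q) + ennreal a * ennreal (norm (\<xi> \<omega>) powr q) \<partial>M)"
  proof (intro nn_integral_mono)
    fix \<omega>
    have "init_term p \<omega> \<le> a * lamc powr q + a * norm (\<xi> \<omega>) powr q"
      using init_term_le[of p \<omega>] p unfolding a_def q_def by (simp add: distrib_left)
    then show "ennreal (init_term p \<omega>) \<le> ennreal (a * lamc powr q) + ennreal a * ennreal (norm (\<xi> \<omega>) powr q)"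
      using a by (simp add: ennreal_plus[symmetric] ennreal_mult[symmetric] ennreal_leI del: ennreal_plus)
  qed
  also have "\<dots> = ennreal (a * lamc powr q) + ennreal a * (\<integral>\<^sup>+\<omega>. ennreal (norm (\<xi> \<omega>) powr q) \<partial>M)"
    by (simp add: nn_integral_add nn_integral_cmult emeasure_space_1)
  also have "(\<integral>\<^sup>+\<omega>. ennreal (norm (\<xi> \<omega>) powr q) \<partial>M) = ennreal (\<integral>\<omega>. norm (\<xi> \<omega>) powr q \<partial>M)"
    by (rule nn_integral_eq_integral[OF int]) simp
  also have "ennreal (a * lamc powr q) + ennreal a * ennreal (\<integral>\<omega>. norm (\<xi> \<omega>) powr q \<partial>M) < \<infinity>"
    by (simp add: ennreal_mult_less_top)
  finally show ?thesis .
qed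

lemma moment_bound:
  assumes p: "1 \<le> p"
  shows "\<exists>C<\<infinity>. \<forall>N. 8 * lamc * p * T \<le> real N \<longrightarrow>
    (\<integral>\<^sup>+\<omega>. ennreal (Max ((\<lambda>n. \<bar>DN c T \<mu> \<sigma> W \<xi> N n \<omega>\<bar> powr p) ` {0..N})) \<partial>M) \<le> C"
proof -
  define C where "C = ennreal (exp (4 * (2 * p * lamc) * T * CARD('m)))
    + (\<integral>\<^sup>+\<omega>. ennreal (init_term p \<omega>) \<partial>M)
    + (1 + 4 * ennreal (exp ((12 * p)^2 * Kb^2 * T / 2)))
    + (1 + 4 * ennreal (exp ((- 12 * p)^2 * Kb^2 * T / 2)))"
  have "C < \<infinity>" using init_term_finite[OF p] by (simp add: C_def ennreal_mult_less_top)
  moreover have "(\<integral>\<^sup>+\<omega>. ennreal (Max ((\<lambda>n. \<bar>DN c T \<mu> \<sigma> W \<xi> N n \<omega>\<bar> powr p) ` {0..N})) \<partial>M) \<le> C"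
    if NN: "8 * lamc * p * T \<le> real N" for N
  proof -
    have "0 < 8 * lamc * p * T" using lamc_ge_1 p T_pos by (intro mult_pos_pos) auto
    then have "0 < real N" using NN by linarith
    then have N: "0 < N" by simp
    have s: "0 \<le> 2 * p * lamc" using lamc_ge_1 p by simp
    have sh: "4 * (2 * p * lamc) * (T / real N) \<le> 1" using NN N by (simp add: field_simps)
    have [measurable]: "qsum N N \<in> borel_measurable M" using grid_meas_M[OF qsum_meas] N by simp
    have [measurable]: "max_term r N \<in> borel_measurable M" for r using max_term_meas[OF N] .
    have "(\<integral>\<^sup>+\<omega>. ennreal (Max ((\<lambda>n. \<bar>DN c T \<mu> \<sigma> W \<xi> N n \<omega>\<bar> powr p) ` {0..N})) \<partial>M)
        \<le> (\<integral>\<^sup>+\<omega>. ennreal (exp (2 * p * lamc * qsum N N \<omega>)) + ennreal (init_term p \<omega>)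
            + ennreal (max_term (12 * p) N \<omega>) + ennreal (max_term (- 12 * p) N \<omega>) \<partial>M)"
      using max_DN_pathwise[of p N] p max_term_nonneg init_term_nonneg
      by (intro nn_integral_mono) (simp add: ennreal_plus[symmetric] ennreal_leI del: ennreal_plus)
    also have "\<dots> = (\<integral>\<^sup>+\<omega>. ennreal (exp (2 * p * lamc * qsum N N \<omega>)) \<partial>M)
        + (\<integral>\<^sup>+\<omega>. ennreal (init_term p \<omega>) \<partial>M)
        + (\<integral>\<^sup>+\<omega>. ennreal (max_term (12 * p) N \<omega>) \<partial>M)
        + (\<integral>\<^sup>+\<omega>. ennreal (max_term (- 12 * p) N \<omega>) \<partial>M)"
      by (simp add: nn_integral_add init_term_nonneg)
    also have "\<dots> \<le> C"
      unfolding C_def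
      by (intro add_mono order_refl qsum_mgf_total[OF N s sh] max_term_bound[OF N])
    finally show ?thesis .
  qed
  ultimately show ?thesis by blast
qed

end


theorem lemma3p5:
  fixes M :: "'a measure" and T c :: real and F :: "real \<Rightarrow> 'a measure"
    and W :: "real \<Rightarrow> 'a \<Rightarrow> real^'m::finite" and \<xi> :: "'a \<Rightarrow> real^'d::finite"
    and \<mu> :: "real^'d \<Rightarrow> real^'d" and \<mu>' :: "real^'d \<Rightarrow> ((real^'d) \<Rightarrow>\<^sub>L (real^'d))"
    and \<sigma> :: "real^'d \<Rightarrow> real^'m^'d"
  assumes "prob_space M"
    and "T > 0"
    and "normal_filtration M T F"
    and "std_brownian_motion M T F W"
    and "\<xi> \<in> borel_measurable (F 0)"
    and "\<forall>p::real. p \<ge> 1 \<longrightarrow> integrable M (\<lambda>\<omega>. norm (\<xi> \<omega>) powr p)"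
    and "\<forall>x. (\<mu> has_derivative blinfun_apply (\<mu>' x)) (at x)"
    and "continuous_on UNIV \<mu>'"
    and "c > 0"
    and "\<forall>x. norm (\<mu>' x) \<le> c * (1 + norm x powr c)"
    and "\<forall>x y. op_norm (\<sigma> x - \<sigma> y) \<le> c * norm (x - y)"
    and "\<forall>x y. inner (x - y) (\<mu> x - \<mu> y) \<le> c * (norm (x - y))\<^sup>2"
  shows "\<forall>p::real. p \<ge> 1 \<longrightarrow>
    (SUP N\<in>{N::nat. real N \<ge> 8 * lam c T \<mu> \<sigma> * p * T}.
       \<integral>\<^sup>+ \<omega>. ennreal (Max ((\<lambda>n. \<bar>DN c T \<mu> \<sigma> W \<xi> N n \<omega>\<bar> powr p) ` {0..N})) \<partial>M) < \<infinity>"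
proof (intro allI impI)
  fix p :: real assume p: "1 \<le> p"
  have mu: "continuous_on UNIV \<mu>"
    using assms(7) by (intro continuous_at_imp_continuous_on ballI has_derivative_continuous) blast
  interpret euler_setting M T c F W \<xi> \<mu> \<sigma>
    by (rule euler_setting.intro[OF assms(1) euler_setting_axioms.intro])
      (use assms(2-5,9) mu in \<open>simp_all add: assms(6,11)\<close>)
  obtain C where "C < \<infinity>" and bound: "\<And>N. 8 * lamc * p * T \<le> real N \<Longrightarrow>
      (\<integral>\<^sup>+\<omega>. ennreal (Max ((\<lambda>n. \<bar>DN c T \<mu> \<sigma> W \<xi> N n \<omega>\<bar> powr p) ` {0..N})) \<partial>M) \<le> C"
    using moment_bound[OF p] by blast
  have "(SUP N\<in>{N::nat. real N \<ge> 8 * lamc * p * T}.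
       \<integral>\<^sup>+ \<omega>. ennreal (Max ((\<lambda>n. \<bar>DN c T \<mu> \<sigma> W \<xi> N n \<omega>\<bar> powr p) ` {0..N})) \<partial>M) \<le> C"
    by (rule SUP_least) (simp add: bound)
  then show "(SUP N\<in>{N::nat. real N \<ge> 8 * lamc * p * T}.
       \<integral>\<^sup>+ \<omega>. ennreal (Max ((\<lambda>n. \<bar>DN c T \<mu> \<sigma> W \<xi> N n \<omega>\<bar> powr p) ` {0..N})) \<partial>M) < \<infinity>"
    using \<open>C < \<infinity>\<close> by (rule le_less_trans)
qed

end
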